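(* Assume $\min\{d_1,\dots,d_{L-1}\}\ge d_{\min}$. Let $(\bm\sigma,\bm\Pi)\in\mathcal B$ and $(\bm\sigma',\bm\Pi')\in\mathcal B$ be arbitrary. Then (i) $\mathcal W_{(\bm\sigma,\bm\Pi)}=\mathcal W_{(\bm\sigma',\bm\Pi')}$ if and only if $\bm\sigma=\bm\sigma'$; (ii) if $\bm\sigma\ne\bm\sigma'$, then $\mathrm{dist}(\mathcal W_{(\bm\sigma,\bm\Pi)},\mathcal W_{(\bm\sigma',\bm\Pi')})\ge\delta_\sigma$.
   Context: Let $L\ge2$, $d_0,\dots,d_L$ positive integers, $d_{\min}=\min\{d_0,d_L\}$, $\lambda>0$, and $y_1\ge\dots\ge y_{d_{\min}}\ge0$. Let $r_Y$ be the number of positive $y_i$, $p_Y$ the number of distinct positive values, $0=s_0<s_1<\dots<s_{p_Y}=r_Y$ with $y_{s_{k-1}+1}=\dots=y_{s_k}>y_{s_k+1}$ (where $y_j=0$ for $j>r_Y$), $h_k=s_k-s_{k-1}$. $\mathcal O^n$: $n\times n$ orthogonal matrices; $\mathcal P^n$: $n\times n$ permutation matrices; $\mathrm{BlkD}$: block diagonal. Define $\mathcal A=\{\bm a\in\mathbb R^{d_{\min}}: a_i^{2L-1}-\sqrt\lambda y_ia_i^{L-1}+\lambda a_i=0,\ a_i\ge0\ \forall i\}$ and $\mathcal B=\{(\bm\sigma,\bm\Pi)\in\mathbb R^{d_{\min}}\times\mathcal P^{d_{\min}}:\exists\bm a\in\mathcal A,\ \bm\sigma=\bm\Pi\bm a,\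 \sigma_1\ge\dots\ge\sigma_{d_{\min}}\}$. For $(\bm\sigma,\bm\Pi)\in\mathcal B$, let $\bm\Sigma_l\in\mathbb R^{d_l\times d_{l-1}}$ have top-left $d_{\min}\times d_{\min}$ block $\mathrm{diag}(\bm\sigma)$ and zeros elsewhere, and let $\mathcal W_{(\bm\sigma,\bm\Pi)}$ be the set of tuples $\bm W=(\bm W_1,\dots,\bm W_L)$, $\bm W_l\in\mathbb R^{d_l\times d_{l-1}}$, for which there exist $\bm Q_l\in\mathcal O^{d_{l-1}}$ ($l=2,\dots,L$), $\bm O_k\in\mathcal O^{h_k}$ ($k\in[p_Y]$), $\bm O_{p_Y+1}\in\mathcal O^{d_0-r_Y}$, $\widehat{\bm O}_{p_Y+1}\in\mathcal O^{d_L-r_Y}$ with $\bm W_1=\bm Q_2\bm\Sigma_1\mathrm{BlkD}(\bm\Pi,\bm I_{d_0-d_{\min}})\mathrm{BlkD}(\bm O_1,\dots,\bm O_{p_Y+1})$, $\bm W_l=\bm Q_{l+1}\bm\Sigma_l\bm Q_l^T$ for $2\le l\le L-1$, and $\bm W_L=\mathrm{BlkD}(\bm O_1^T,\dots,\bm O_{p_Y}^T,\widehat{\bm O}_{p_Y+1}^T)\mathrm{BlkD}(\bm\Pi^T,\bm I_{d_L-d_{\min}})\bm\Sigma_L\bm Q_L^T$. Let $\mathcal Y=\bigcup_{i\in[d_{\min}]}\{\sigma\ge0:\sigma^{2L-1}+\lambda\sigma-\sqrt\lambda y_i\sigma^{L-1}=0\}$ and $\delta_\sigma=\min\{|x-y|:x\ne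 y\in\mathcal Y\}$. For sets, $\mathrm{dist}(\mathcal X,\mathcal X')=\inf_{\bm W\in\mathcal X,\bm W'\in\mathcal X'}(\sum_l\|\bm W_l-\bm W_l'\|_F^2)^{1/2}$. *)

theory Defs
  imports "Jordan_Normal_Form.Matrix" "HOL-Combinatorics.Permutations"
begin

(* All indices below are 0-based: the paper's y_i, sigma_i, a_i (i = 1..d_min)
   are y (i-1), sigma $ (i-1), a $ (i-1).  A tuple W = (W_1,...,W_L) is a list
   of length L with W ! (l-1) = W_l. *)

definition dmin :: "(nat \<Rightarrow> nat) \<Rightarrow> nat \<Rightarrow> nat" where
  "dmin d L = min (d 0) (d L)"

definition orth_mat :: "nat \<Rightarrow> real mat \<Rightarrow> bool" where
  "orth_mat n Q \<longleftrightarrow> Q \<in> carrier_mat n n \<and> transpose_mat Q * Q = 1\<^sub>m n"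

definition perm_mat :: "nat \<Rightarrow> real mat \<Rightarrow> bool" where
  "perm_mat n P \<longleftrightarrow> (\<exists>p. p permutes {..<n} \<and>
      P = mat n n (\<lambda>(i,j). if i = p j then 1 else 0))"

fun blkdiag :: "real mat list \<Rightarrow> real mat" where
  "blkdiag [] = 0\<^sub>m 0 0"
| "blkdiag (A # As) = (let B = blkdiag As in
     four_block_mat A (0\<^sub>m (dim_row A) (dim_col B)) (0\<^sub>m (dim_row B) (dim_col A)) B)"

definition Aset :: "nat \<Rightarrow> nat \<Rightarrow> real \<Rightarrow> (nat \<Rightarrow> real) \<Rightarrow> real vec set" where
  "Aset L m lam y = {a. a \<in> carrier_vec m \<and> (\<forall>i<m. a $ i \<ge> 0 \<and>
      (a $ i) ^ (2*L - 1) - sqrt lam * y i * (a $ i) ^ (L - 1) + lam * a $ i = 0)}"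

definition Bset :: "nat \<Rightarrow> nat \<Rightarrow> real \<Rightarrow> (nat \<Rightarrow> real) \<Rightarrow> (real vec \<times> real mat) set" where
  "Bset L m lam y = {(\<sigma>, Pm). \<sigma> \<in> carrier_vec m \<and> perm_mat m Pm \<and>
      (\<exists>a \<in> Aset L m lam y. \<sigma> = Pm *\<^sub>v a) \<and>
      (\<forall>i j. i \<le> j \<longrightarrow> j < m \<longrightarrow> \<sigma> $ j \<le> \<sigma> $ i)}"

definition rY :: "nat \<Rightarrow> (nat \<Rightarrow> real) \<Rightarrow> nat" where
  "rY m y = card {i. i < m \<and> y i > 0}"

definition pY :: "nat \<Rightarrow> (nat \<Rightarrow> real) \<Rightarrow> nat" where
  "pY m y = card {y i | i. i < m \<and> y i > 0}"

(* y extended by zero: yext m y j = y_{j+1} (1-based), 0 beyond d_min *)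
definition yext :: "nat \<Rightarrow> (nat \<Rightarrow> real) \<Rightarrow> nat \<Rightarrow> real" where
  "yext m y j = (if j < m then y j else 0)"

(* s_0 = 0 and s_1 < ... < s_{p_Y} are the (1-based) positions j \<le> r_Y with
   y_j > y_{j+1} *)
definition sY :: "nat \<Rightarrow> (nat \<Rightarrow> real) \<Rightarrow> nat \<Rightarrow> nat" where
  "sY m y k = (0 # sorted_list_of_set
      {j. 1 \<le> j \<and> j \<le> rY m y \<and> yext m y (j - 1) > yext m y j}) ! k"

definition hY :: "nat \<Rightarrow> (nat \<Rightarrow> real) \<Rightarrow> nat \<Rightarrow> nat" where
  "hY m y k = sY m y k - sY m y (k - 1)"

definition Sig :: "(nat \<Rightarrow> nat) \<Rightarrow> nat \<Rightarrow> real vec \<Rightarrow> nat \<Rightarrow> real mat" where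
  "Sig d L \<sigma> l = mat (d l) (d (l - 1))
      (\<lambda>(i,j). if i = j \<and> i < dmin d L then \<sigma> $ i else 0)"

(* the set \<W>_{(\<sigma>,Pm)};  Q l is Q_l (l = 2..L), Ob k is O_k (k = 1..p_Y+1),
   Oh is \<hat>O_{p_Y+1} *)
definition Wset :: "(nat \<Rightarrow> nat) \<Rightarrow> nat \<Rightarrow> (nat \<Rightarrow> real) \<Rightarrow> real vec \<Rightarrow> real mat
    \<Rightarrow> real mat list set" where
  "Wset d L y \<sigma> Pm = (let m = dmin d L; r = rY m y; p = pY m y in
     {W. length W = L \<and>
       (\<exists>Q Ob Oh.
          (\<forall>l\<in>{2..L}. orth_mat (d (l - 1)) (Q l)) \<and>
          (\<forall>k\<in>{1..p}. orth_mat (hY m y k) (Ob k)) \<and>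
          orth_mat (d 0 - r) (Ob (p + 1)) \<and>
          orth_mat (d L - r) Oh \<and>
          W ! 0 = Q 2 * Sig d L \<sigma> 1
                  * four_block_mat Pm (0\<^sub>m m (d 0 - m)) (0\<^sub>m (d 0 - m) m) (1\<^sub>m (d 0 - m))
                  * blkdiag (map Ob [1..<p + 2]) \<and>
          (\<forall>l\<in>{2..L - 1}. W ! (l - 1) = Q (l + 1) * Sig d L \<sigma> l * transpose_mat (Q l)) \<and>
          W ! (L - 1) = blkdiag (map (\<lambda>k. transpose_mat (Ob k)) [1..<p + 1] @ [transpose_mat Oh])
                  * four_block_mat (transpose_mat Pm) (0\<^sub>m m (d L - m)) (0\<^sub>m (d L - m) m) (1\<^sub>m (d L - m))
                  * Sig d L \<sigma> L * transpose_mat (Q L))})"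

definition frob_sq :: "real mat \<Rightarrow> real" where
  "frob_sq A = (\<Sum>i<dim_row A. \<Sum>j<dim_col A. (A $$ (i,j))^2)"

definition set_dist :: "nat \<Rightarrow> real mat list set \<Rightarrow> real mat list set \<Rightarrow> real" where
  "set_dist L X X' = Inf {sqrt (\<Sum>l<L. frob_sq (W ! l - W' ! l)) | W W'. W \<in> X \<and> W' \<in> X'}"

definition Yset :: "nat \<Rightarrow> nat \<Rightarrow> real \<Rightarrow> (nat \<Rightarrow> real) \<Rightarrow> real set" where
  "Yset L m lam y = (\<Union>i<m. {s. s \<ge> 0 \<and>
      s ^ (2*L - 1) + lam * s - sqrt lam * y i * s ^ (L - 1) = 0})"

definition delta_sigma :: "nat \<Rightarrow> nat \<Rightarrow> real \<Rightarrow> (nat \<Rightarrow> real) \<Rightarrow> real" where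
  "delta_sigma L m lam y = Inf {\<bar>x - x'\<bar> | x x'. x \<in> Yset L m lam y \<and> x' \<in> Yset L m lam y \<and> x \<noteq> x'}"

end

theory Submission
  imports Defs "Jordan_Normal_Form.Determinant"
begin

text \<open>
  The first layer of every \<open>W \<in> \<W>\<^bsub>(\<sigma>,\<Pi>)\<^esub>\<close> has the form
  \<open>W\<^sub>1 = U \<Sigma>\<^sub>1 V\<close> with \<open>U\<close>, \<open>V\<close> orthogonal, and a von Neumann type trace bound, obtained from a
  rearrangement inequality for doubly substochastic matrices, gives
  \<open>\<parallel>U \<Sigma>\<^sub>1 V - U' \<Sigma>'\<^sub>1 V'\<parallel>\<^sub>F\<^sup>2 \<ge> \<Sum>\<^sub>i (\<sigma>\<^sub>i - \<sigma>'\<^sub>i)\<^sup>2\<close>. All \<open>\<sigma>\<^sub>i\<close>, \<open>\<sigma>'\<^sub>i\<close> lie in \<open>\<Y>\<close>, so a single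
  coordinate in which \<open>\<sigma>\<close> and \<open>\<sigma>'\<close> differ forces distance at least \<open>\<delta>\<^sub>\<sigma>\<close>, and in particular
  different sets.

  Conversely, if \<open>\<sigma> = \<Pi> a = \<Pi>' a'\<close>, then \<open>\<Pi>\<close> and \<open>\<Pi>' g\<close> act alike on the support of \<open>\<sigma>\<close> for
  some permutation \<open>g\<close> preserving \<open>y\<close>. Such a \<open>g\<close> is block diagonal with respect to the blocks
  of equal entries of \<open>y\<close>, hence it is absorbed into the orthogonal factors \<open>O\<^sub>k\<close>, and the two
  sets coincide.
\<close>

lemma index_mult_mat_sum:
  fixes A B :: "real mat"
  assumes "A \<in> carrier_mat a n" "B \<in> carrier_mat n c" "i < a" "j < c"
  shows "(A * B) $$ (i,j) = (\<Sum>k<n. A $$ (i,k) * B $$ (k,j))"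
  using assms by (auto simp: scalar_prod_def intro!: sum.cong)

lemma sum_lessThan_if_eq: "(\<Sum>k<(n::nat). if k = i then c k else 0) = (if i < n then c i else (0::real))"
  by (simp add: sum.delta)

lemma sum_lessThan_restrict:
  "m \<le> (n::nat) \<Longrightarrow> (\<Sum>i<n. if i < m then f i else 0) = (\<Sum>i<m. (f i :: real))"
  by (rule sum.mono_neutral_cong_right) auto

section \<open>Orthogonal matrices\<close>

lemma orth_mat_carrier: "orth_mat n Q \<Longrightarrow> Q \<in> carrier_mat n n"
  by (simp add: orth_mat_def)

lemma orth_mat_mult_transpose: "orth_mat n Q \<Longrightarrow> Q * transpose_mat Q = 1\<^sub>m n"
  using mat_mult_left_right_inverse[of "transpose_mat Q" n Q] by (auto simp: orth_mat_def)

lemma orth_mat_transpose: "orth_mat n Q \<Longrightarrow> orth_mat n (transpose_mat Q)"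
  using orth_mat_mult_transpose[of n Q] by (auto simp: orth_mat_def)

lemma orth_mat_one: "orth_mat n (1\<^sub>m n)"
  by (simp add: orth_mat_def)

lemma orth_mat_cancel_left:
  assumes "orth_mat n U" "A \<in> carrier_mat n c"
  shows "transpose_mat U * (U * A) = A"
proof -
  have "transpose_mat U * (U * A) = (transpose_mat U * U) * A"
    using assoc_mult_mat[of "transpose_mat U" n n U n A c] assms orth_mat_carrier by auto
  then show ?thesis using assms by (simp add: orth_mat_def)
qed

lemma orth_mat_cancel_right:
  assumes "orth_mat n V" "A \<in> carrier_mat a n"
  shows "(A * V) * transpose_mat V = A"
proof -
  have "(A * V) * transpose_mat V = A * (V * transpose_mat V)"
    using assoc_mult_mat[of A a n V n "transpose_mat V" n] assms orth_mat_carrier by auto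
  then show ?thesis using orth_mat_mult_transpose[OF assms(1)] assms(2) by simp
qed

lemma orth_mat_mult:
  assumes "orth_mat n A" "orth_mat n B"
  shows "orth_mat n (A * B)"
proof -
  have A: "A \<in> carrier_mat n n" and B: "B \<in> carrier_mat n n"
    using assms by (auto simp: orth_mat_def)
  have "transpose_mat (A * B) * (A * B) = transpose_mat B * (transpose_mat A * (A * B))"
    using assoc_mult_mat[of "transpose_mat B" n n "transpose_mat A" n "A * B" n] A B
    by (simp add: transpose_mult[OF A B])
  also have "\<dots> = 1\<^sub>m n"
    using orth_mat_cancel_left[OF assms(1) B] assms(2) by (simp add: orth_mat_def)
  finally show ?thesis using A B by (simp add: orth_mat_def)
qed

lemma orth_mat_row_sum_sq:
  assumes "orth_mat n Q" "i < n"
  shows "(\<Sum>k<n. (Q $$ (i,k))^2) = 1"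
proof -
  have "(Q * transpose_mat Q) $$ (i,i) = (\<Sum>k<n. (Q $$ (i,k))^2)"
    using index_mult_mat_sum[of Q n n "transpose_mat Q" n i i] assms orth_mat_carrier[OF assms(1)]
    by (simp add: power2_eq_square)
  then show ?thesis using orth_mat_mult_transpose[OF assms(1)] assms(2) by simp
qed

lemma orth_mat_col_sum_sq:
  assumes "orth_mat n Q" "i < n"
  shows "(\<Sum>k<n. (Q $$ (k,i))^2) = 1"
  using orth_mat_row_sum_sq[OF orth_mat_transpose[OF assms(1)] assms(2)] assms
    orth_mat_carrier[OF assms(1)] by simp

lemma orth_mat_four_block:
  assumes "orth_mat n A" "orth_mat k D"
  shows "orth_mat (n + k) (four_block_mat A (0\<^sub>m n k) (0\<^sub>m k n) D)"
proof -
  have A: "A \<in> carrier_mat n n" and D: "D \<in> carrier_mat k k"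
    using assms by (auto simp: orth_mat_def)
  have "transpose_mat (four_block_mat A (0\<^sub>m n k) (0\<^sub>m k n) D) * four_block_mat A (0\<^sub>m n k) (0\<^sub>m k n) D
     = four_block_mat (transpose_mat A) (0\<^sub>m n k) (0\<^sub>m k n) (transpose_mat D)
       * four_block_mat A (0\<^sub>m n k) (0\<^sub>m k n) D"
    by (simp add: transpose_four_block_mat[OF A zero_carrier_mat zero_carrier_mat D])
  also have "\<dots> = four_block_mat (1\<^sub>m n) (0\<^sub>m n k) (0\<^sub>m k n) (1\<^sub>m k)"
    using A D assms by (subst mult_four_block_mat[of _ n n _ k _ k]) (auto simp: orth_mat_def)
  also have "\<dots> = 1\<^sub>m (n + k)" by (intro eq_matI) auto
  finally show ?thesis using A D by (simp add: orth_mat_def)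
qed

section \<open>Block diagonal matrices\<close>

definition square_blocks :: "real mat list \<Rightarrow> nat list \<Rightarrow> bool" where
  "square_blocks As ns \<longleftrightarrow> length As = length ns \<and> (\<forall>k<length As. As ! k \<in> carrier_mat (ns ! k) (ns ! k))"

definition orth_blocks :: "real mat list \<Rightarrow> nat list \<Rightarrow> bool" where
  "orth_blocks As ns \<longleftrightarrow> length As = length ns \<and> (\<forall>k<length As. orth_mat (ns ! k) (As ! k))"

lemma square_blocks_Nil[simp]: "square_blocks [] ns \<longleftrightarrow> ns = []"
  by (auto simp: square_blocks_def)

lemma square_blocks_Cons[simp]:
  "square_blocks (A # As) (n # ns) \<longleftrightarrow> A \<in> carrier_mat n n \<and> square_blocks As ns"
  by (auto simp: square_blocks_def nth_Cons split: nat.splits)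

lemma square_blocks_Cons_Nil[simp]: "\<not> square_blocks (A # As) []"
  by (simp add: square_blocks_def)

lemma square_blocks_snoc:
  "square_blocks (As @ [C]) (ns @ [n]) \<longleftrightarrow> square_blocks As ns \<and> C \<in> carrier_mat n n"
  by (auto simp: square_blocks_def nth_append)

lemma orth_blocks_snoc:
  "orth_blocks (As @ [C]) (ns @ [n]) \<longleftrightarrow> orth_blocks As ns \<and> orth_mat n C"
  by (auto simp: orth_blocks_def nth_append)

lemma orth_blocks_square_blocks: "orth_blocks As ns \<Longrightarrow> square_blocks As ns"
  unfolding orth_blocks_def square_blocks_def using orth_mat_carrier by blast

lemma square_blocks_map2_mult:
  "square_blocks As ns \<Longrightarrow> square_blocks Bs ns \<Longrightarrow> square_blocks (map2 (*) As Bs) ns"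
  by (auto simp: square_blocks_def)

lemma square_blocks_map_transpose:
  "square_blocks As ns \<Longrightarrow> square_blocks (map transpose_mat As) ns"
  by (auto simp: square_blocks_def)

lemma orth_blocks_map2_mult:
  "orth_blocks As ns \<Longrightarrow> orth_blocks Bs ns \<Longrightarrow> orth_blocks (map2 (*) As Bs) ns"
  by (auto simp: orth_blocks_def orth_mat_mult)

lemma blkdiag_carrier:
  "square_blocks As ns \<Longrightarrow> blkdiag As \<in> carrier_mat (sum_list ns) (sum_list ns)"
proof (induction As arbitrary: ns)
  case (Cons A As ns')
  then obtain n ns where "ns' = n # ns" "A \<in> carrier_mat n n" "square_blocks As ns"
    by (cases ns') auto
  then show ?case using Cons.IH four_block_carrier_mat by (simp add: Let_def)
qed simp

lemma blkdiag_Cons: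
  assumes "A \<in> carrier_mat n n" "square_blocks As ns"
  shows "blkdiag (A # As) = four_block_mat A (0\<^sub>m n (sum_list ns)) (0\<^sub>m (sum_list ns) n) (blkdiag As)"
  using assms blkdiag_carrier[OF assms(2)] by (simp add: Let_def)

lemma blkdiag_snoc:
  "square_blocks As ns \<Longrightarrow> C \<in> carrier_mat c c \<Longrightarrow>
   blkdiag (As @ [C]) = four_block_mat (blkdiag As) (0\<^sub>m (sum_list ns) c) (0\<^sub>m c (sum_list ns)) C"
proof (induction As arbitrary: ns)
  case Nil
  then show ?case using blkdiag_Cons[OF Nil(2), of "[]" "[]"] by (auto intro!: eq_matI)
next
  case (Cons A As ns')
  then obtain n ns where ns': "ns' = n # ns" and A: "A \<in> carrier_mat n n"
    and sA: "square_blocks As ns" by (cases ns') auto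
  have sAC: "square_blocks (As @ [C]) (ns @ [c])" using sA Cons.prems(2) square_blocks_snoc by simp
  show ?case
    using blkdiag_Cons[OF A sAC] blkdiag_Cons[OF A sA] Cons.IH[OF sA Cons.prems(2)]
      A blkdiag_carrier[OF sA] Cons.prems(2) ns'
    by (auto intro!: eq_matI)
qed

lemma orth_mat_blkdiag: "orth_blocks As ns \<Longrightarrow> orth_mat (sum_list ns) (blkdiag As)"
proof (induction As arbitrary: ns)
  case Nil
  then show ?case by (auto simp: orth_blocks_def orth_mat_def intro!: eq_matI)
next
  case (Cons A As ns')
  then obtain n ns where ns': "ns' = n # ns" and oA: "orth_mat n A" and oAs: "orth_blocks As ns"
    by (cases ns') (auto simp: orth_blocks_def nth_Cons split: nat.splits)
  then show ?case
    using orth_mat_four_block[OF oA Cons.IH[OF oAs]]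
      blkdiag_Cons[OF orth_mat_carrier[OF oA] orth_blocks_square_blocks[OF oAs]] by simp
qed

lemma blkdiag_mult:
  "square_blocks As ns \<Longrightarrow> square_blocks Bs ns \<Longrightarrow> blkdiag As * blkdiag Bs = blkdiag (map2 (*) As Bs)"
proof (induction As arbitrary: Bs ns)
  case Nil
  then show ?case by (auto simp: square_blocks_def intro!: eq_matI)
next
  case (Cons A As Bs' ns')
  then obtain n ns B Bs where ns': "ns' = n # ns" and Bs': "Bs' = B # Bs"
    by (cases ns'; cases Bs') (auto simp: square_blocks_def)
  have A: "A \<in> carrier_mat n n" and sA: "square_blocks As ns"
    and B: "B \<in> carrier_mat n n" and sB: "square_blocks Bs ns"
    using Cons.prems ns' Bs' by auto
  have "blkdiag (A # As) * blkdiag (B # Bs) =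
      four_block_mat (A * B) (0\<^sub>m n (sum_list ns)) (0\<^sub>m (sum_list ns) n) (blkdiag As * blkdiag Bs)"
    unfolding blkdiag_Cons[OF A sA] blkdiag_Cons[OF B sB]
    using A B blkdiag_carrier[OF sA] blkdiag_carrier[OF sB]
    by (subst mult_four_block_mat[of A n n _ "sum_list ns" _ "sum_list ns"]) auto
  then show ?case
    using blkdiag_Cons[OF mult_carrier_mat[OF A B] square_blocks_map2_mult[OF sA sB]]
      Cons.IH[OF sA sB] Bs' by simp
qed

lemma transpose_blkdiag:
  "square_blocks As ns \<Longrightarrow> transpose_mat (blkdiag As) = blkdiag (map transpose_mat As)"
proof (induction As arbitrary: ns)
  case Nil
  then show ?case by (auto intro!: eq_matI)
next
  case (Cons A As ns')
  then obtain n ns where ns': "ns' = n # ns" and A: "A \<in> carrier_mat n n"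
    and sA: "square_blocks As ns" by (cases ns') auto
  show ?case
    using blkdiag_Cons[OF A sA] blkdiag_Cons[OF transpose_carrier_mat[THEN iffD2, OF A] square_blocks_map_transpose[OF sA]]
      Cons.IH[OF sA] transpose_four_block_mat[OF A zero_carrier_mat zero_carrier_mat blkdiag_carrier[OF sA]]
    by simp
qed

lemma four_block_mat_eqD:
  assumes "four_block_mat A B C D = four_block_mat A' B' C' D'"
    "A \<in> carrier_mat n1 m1" "A' \<in> carrier_mat n1 m1" "D \<in> carrier_mat n2 m2" "D' \<in> carrier_mat n2 m2"
  shows "A = A'" "D = D'"
proof (rule eq_matI)
  fix i j assume "i < dim_row A'" "j < dim_col A'"
  then show "A $$ (i,j) = A' $$ (i,j)"
    using arg_cong[OF assms(1), of "\<lambda>M. M $$ (i,j)"] assms(2-5) by simp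
next
  show "dim_row A = dim_row A'" "dim_col A = dim_col A'" using assms(2,3) by auto
next
  show "D = D'"
  proof (rule eq_matI)
    fix i j assume "i < dim_row D'" "j < dim_col D'"
    then show "D $$ (i,j) = D' $$ (i,j)"
      using arg_cong[OF assms(1), of "\<lambda>M. M $$ (i + n1, j + m1)"] assms(2-5) by simp
  qed (use assms(4,5) in auto)
qed

lemma blkdiag_inj:
  "square_blocks As ns \<Longrightarrow> square_blocks Bs ns \<Longrightarrow> blkdiag As = blkdiag Bs \<Longrightarrow> As = Bs"
proof (induction As arbitrary: Bs ns)
  case Nil
  then show ?case by (auto simp: square_blocks_def)
next
  case (Cons A As Bs' ns')
  then obtain n ns B Bs where ns': "ns' = n # ns" and Bs': "Bs' = B # Bs"
    by (cases ns'; cases Bs') (auto simp: square_blocks_def)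
  have A: "A \<in> carrier_mat n n" and sA: "square_blocks As ns"
    and B: "B \<in> carrier_mat n n" and sB: "square_blocks Bs ns"
    using Cons.prems ns' Bs' by auto
  note eq = Cons.prems(3)[unfolded Bs' blkdiag_Cons[OF A sA] blkdiag_Cons[OF B sB]]
  show ?case
    using four_block_mat_eqD[OF eq A B blkdiag_carrier[OF sA] blkdiag_carrier[OF sB]]
      Cons.IH[OF sA sB] Bs' by simp
qed

lemma blkdiag_one: "blkdiag (map (\<lambda>n. 1\<^sub>m n) ns) = 1\<^sub>m (sum_list ns)"
proof (induction ns)
  case Nil
  then show ?case by (auto intro!: eq_matI)
next
  case (Cons n ns)
  have "square_blocks (map (\<lambda>n. 1\<^sub>m n) ns) ns" by (auto simp: square_blocks_def)
  then show ?case using blkdiag_Cons[OF one_carrier_mat] Cons.IH by (auto intro!: eq_matI)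
qed

lemma orth_blocks_if_orth_mat_blkdiag:
  assumes "square_blocks As ns" "orth_mat (sum_list ns) (blkdiag As)"
  shows "orth_blocks As ns"
proof -
  have sAt: "square_blocks (map2 (*) (map transpose_mat As) As) ns"
    using square_blocks_map2_mult[OF square_blocks_map_transpose[OF assms(1)] assms(1)] .
  have "blkdiag (map2 (*) (map transpose_mat As) As) = transpose_mat (blkdiag As) * blkdiag As"
    using blkdiag_mult[OF square_blocks_map_transpose[OF assms(1)] assms(1)]
      transpose_blkdiag[OF assms(1)] by simp
  also have "\<dots> = blkdiag (map (\<lambda>n. 1\<^sub>m n) ns)"
    using assms(2) by (simp add: orth_mat_def blkdiag_one)
  finally have eq: "blkdiag (map2 (*) (map transpose_mat As) As) = blkdiag (map (\<lambda>n. 1\<^sub>m n) ns)" .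
  have ones: "square_blocks (map (\<lambda>n. 1\<^sub>m n) ns) ns" by (auto simp: square_blocks_def)
  have prods: "map2 (*) (map transpose_mat As) As = map (\<lambda>n. 1\<^sub>m n) ns"
    using blkdiag_inj[OF sAt ones eq] .
  show ?thesis unfolding orth_blocks_def
  proof (intro conjI allI impI)
    show "length As = length ns" using assms(1) by (simp add: square_blocks_def)
    fix k assume k: "k < length As"
    have "transpose_mat (As ! k) * As ! k = 1\<^sub>m (ns ! k)"
      using arg_cong[OF prods, of "\<lambda>xs. xs ! k"] k assms(1) by (simp add: square_blocks_def)
    then show "orth_mat (ns ! k) (As ! k)"
      using assms(1) k by (simp add: square_blocks_def orth_mat_def)
  qed
qed

fun block_of :: "nat list \<Rightarrow> nat \<Rightarrow> nat" where
  "block_of [] i = 0"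
| "block_of (n # ns) i = (if i < n then 0 else Suc (block_of ns (i - n)))"

lemma block_ofI:
  "k < length ns \<Longrightarrow> sum_list (take k ns) \<le> i \<Longrightarrow> i < sum_list (take (Suc k) ns) \<Longrightarrow> block_of ns i = k"
proof (induction ns arbitrary: i k)
  case (Cons n ns i k)
  then show ?case by (cases k) auto
qed simp

lemma block_of_append_left: "i < sum_list ns \<Longrightarrow> block_of (ns @ ms) i = block_of ns i"
  by (induction ns arbitrary: i) auto

lemma block_of_snoc_last:
  "sum_list ns \<le> i \<Longrightarrow> i < sum_list ns + c \<Longrightarrow> block_of (ns @ [c]) i = length ns"
  by (induction ns arbitrary: i) auto

lemma blkdiag_if_block_supported:
  "X \<in> carrier_mat (sum_list ns) (sum_list ns) \<Longrightarrow>
   (\<forall>i j. i < sum_list ns \<longrightarrow> j < sum_list ns \<longrightarrow> block_of ns i \<noteq> block_of ns j \<longrightarrow> X $$ (i,j) = 0) \<Longrightarrow>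
   \<exists>As. square_blocks As ns \<and> X = blkdiag As"
proof (induction ns arbitrary: X)
  case Nil
  then show ?case by (intro exI[of _ "[]"]) (auto intro!: eq_matI)
next
  case (Cons n ns X)
  let ?N = "sum_list ns"
  define A where "A = mat n n (\<lambda>(i,j). X $$ (i,j))"
  define D where "D = mat ?N ?N (\<lambda>(i,j). X $$ (i + n, j + n))"
  have "\<forall>i j. i < ?N \<longrightarrow> j < ?N \<longrightarrow> block_of ns i \<noteq> block_of ns j \<longrightarrow> D $$ (i,j) = 0"
    using Cons.prems(2) by (auto simp: D_def)
  then obtain As where As: "square_blocks As ns" "D = blkdiag As"
    using Cons.IH[of D] by (auto simp: D_def)
  have "X = four_block_mat A (0\<^sub>m n ?N) (0\<^sub>m ?N n) D"
  proof (rule eq_matI)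
    fix i j assume "i < dim_row (four_block_mat A (0\<^sub>m n ?N) (0\<^sub>m ?N n) D)"
      "j < dim_col (four_block_mat A (0\<^sub>m n ?N) (0\<^sub>m ?N n) D)"
    then have "i < n + ?N" "j < n + ?N" by (auto simp: A_def D_def)
    then show "X $$ (i,j) = four_block_mat A (0\<^sub>m n ?N) (0\<^sub>m ?N n) D $$ (i,j)"
      using Cons.prems(2)[rule_format, of i j] by (auto simp: A_def D_def)
  qed (use Cons.prems(1) in \<open>auto simp: A_def D_def\<close>)
  then have "X = blkdiag (A # As)"
    using blkdiag_Cons[of A n, OF _ As(1)] As(2) by (simp add: A_def)
  then show ?case using As(1) by (intro exI[of _ "A # As"]) (auto simp: A_def)
qed

section \<open>Permutation matrices\<close>

definition permmat :: "nat \<Rightarrow> (nat \<Rightarrow> nat) \<Rightarrow> real mat" where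
  "permmat n f = mat n n (\<lambda>(i,j). if i = f j then 1 else 0)"

lemma permmat_carrier[simp]: "permmat n f \<in> carrier_mat n n"
  by (simp add: permmat_def)

lemma permmat_dims[simp]: "dim_row (permmat n f) = n" "dim_col (permmat n f) = n"
  by (simp_all add: permmat_def)

lemma index_permmat[simp]: "i < n \<Longrightarrow> j < n \<Longrightarrow> permmat n f $$ (i,j) = (if i = f j then 1 else 0)"
  by (simp add: permmat_def)

lemma perm_matE:
  assumes "perm_mat n P"
  obtains f where "f permutes {..<n}" "P = permmat n f"
  using assms unfolding perm_mat_def permmat_def by blast

lemma permutes_lessThan: "f permutes {..<n} \<Longrightarrow> j < n \<Longrightarrow> f j < n"
  using permutes_in_image by fastforce

lemma permmat_mult:
  assumes "\<forall>j<n. g j < n"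
  shows "permmat n f * permmat n g = permmat n (f \<circ> g)"
proof (rule eq_matI)
  fix i j assume "i < dim_row (permmat n (f \<circ> g))" "j < dim_col (permmat n (f \<circ> g))"
  then have ij: "i < n" "j < n" by auto
  have "(permmat n f * permmat n g) $$ (i,j) = (\<Sum>k<n. permmat n f $$ (i,k) * permmat n g $$ (k,j))"
    using index_mult_mat_sum[of "permmat n f" n n "permmat n g" n i j] ij by simp
  also have "\<dots> = (\<Sum>k<n. if k = g j then (if i = f k then 1 else 0) else 0)"
    using ij by (intro sum.cong) auto
  also have "\<dots> = permmat n (f \<circ> g) $$ (i,j)"
    using assms ij by (simp add: sum_lessThan_if_eq)
  finally show "(permmat n f * permmat n g) $$ (i,j) = permmat n (f \<circ> g) $$ (i,j)" .
qed auto

lemma orth_mat_permmat: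
  assumes "f permutes {..<n}"
  shows "orth_mat n (permmat n f)"
  unfolding orth_mat_def
proof (intro conjI permmat_carrier eq_matI)
  fix i j assume "i < dim_row (1\<^sub>m n)" "j < dim_col (1\<^sub>m n)"
  then have ij: "i < n" "j < n" by auto
  have "(transpose_mat (permmat n f) * permmat n f) $$ (i,j)
      = (\<Sum>k<n. permmat n f $$ (k,i) * permmat n f $$ (k,j))"
    using index_mult_mat_sum[of "transpose_mat (permmat n f)" n n "permmat n f" n i j] ij by simp
  also have "\<dots> = (\<Sum>k<n. if k = f i then (if f i = f j then 1 else 0) else 0)"
    using ij by (intro sum.cong) auto
  also have "\<dots> = 1\<^sub>m n $$ (i,j)"
    using ij permutes_lessThan[OF assms ij(1)] permutes_inj[OF assms]
    by (simp add: sum_lessThan_if_eq inj_eq)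
  finally show "(transpose_mat (permmat n f) * permmat n f) $$ (i,j) = 1\<^sub>m n $$ (i,j)" .
qed auto

lemma permmat_mult_vec:
  assumes "f permutes {..<n}" "j < n" "a \<in> carrier_vec n"
  shows "(permmat n f *\<^sub>v a) $ f j = a $ j"
proof -
  have fj: "f j < n" using permutes_lessThan[OF assms(1,2)] .
  have "(permmat n f *\<^sub>v a) $ f j = (\<Sum>k<n. permmat n f $$ (f j, k) * a $ k)"
    using assms fj by (auto simp: scalar_prod_def intro!: sum.cong)
  also have "\<dots> = (\<Sum>k<n. if k = j then a $ k else 0)"
    using fj permutes_inj[OF assms(1)] by (intro sum.cong) (auto simp: inj_eq)
  finally show ?thesis using assms(2) by (simp add: sum_lessThan_if_eq)
qed

text \<open>\<open>pad_mat N m X\<close> is \<open>BlkD(X, I\<^sub>N\<^sub>-\<^sub>m)\<close>, the form in which \<open>\<Pi>\<close> enters \<open>W\<^sub>1\<close> and \<open>W\<^sub>L\<close>.\<close>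

definition pad_mat :: "nat \<Rightarrow> nat \<Rightarrow> real mat \<Rightarrow> real mat" where
  "pad_mat N m X = four_block_mat X (0\<^sub>m m (N - m)) (0\<^sub>m (N - m) m) (1\<^sub>m (N - m))"

lemma pad_mat_carrier: "X \<in> carrier_mat m m \<Longrightarrow> m \<le> N \<Longrightarrow> pad_mat N m X \<in> carrier_mat N N"
  unfolding pad_mat_def using four_block_carrier_mat[of X m m "1\<^sub>m (N - m)" "N - m" "N - m"] by simp

lemma index_pad_mat:
  "X \<in> carrier_mat m m \<Longrightarrow> m \<le> N \<Longrightarrow> i < N \<Longrightarrow> j < N \<Longrightarrow>
   pad_mat N m X $$ (i,j) =
     (if i < m \<and> j < m then X $$ (i,j) else if i < m \<or> j < m then 0 else if i = j then 1 else 0)"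
  unfolding pad_mat_def by auto

lemma pad_mat_mult:
  assumes "X \<in> carrier_mat m m" "Y \<in> carrier_mat m m" "m \<le> N"
  shows "pad_mat N m X * pad_mat N m Y = pad_mat N m (X * Y)"
  unfolding pad_mat_def using assms
  by (subst mult_four_block_mat[of X m m _ "N - m" _ "N - m"]) auto

lemma transpose_pad_mat:
  assumes "X \<in> carrier_mat m m"
  shows "transpose_mat (pad_mat N m X) = pad_mat N m (transpose_mat X)"
  unfolding pad_mat_def using assms
  by (subst transpose_four_block_mat[of X m m _ "N - m" _ "N - m"]) auto

lemma orth_mat_pad_mat: "orth_mat m X \<Longrightarrow> m \<le> N \<Longrightarrow> orth_mat N (pad_mat N m X)"
  using orth_mat_four_block[OF _ orth_mat_one[of "N - m"]] unfolding pad_mat_def by fastforce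

lemma Sig_carrier: "Sig d L \<sigma> l \<in> carrier_mat (d l) (d (l - 1))"
  by (simp add: Sig_def)

lemma index_Sig_mult:
  assumes "X \<in> carrier_mat (d (l - 1)) c" "i < d l" "j < c" "dmin d L \<le> d (l - 1)"
  shows "(Sig d L \<sigma> l * X) $$ (i,j) = (if i < dmin d L then \<sigma> $ i * X $$ (i,j) else 0)"
proof -
  have "(Sig d L \<sigma> l * X) $$ (i,j) = (\<Sum>k<d (l - 1). Sig d L \<sigma> l $$ (i,k) * X $$ (k,j))"
    using index_mult_mat_sum[OF Sig_carrier assms(1-3)] .
  also have "\<dots> = (\<Sum>k<d (l - 1). if k = i then (if i < dmin d L then \<sigma> $ i * X $$ (i,j) else 0) else 0)"
    using assms by (intro sum.cong) (auto simp: Sig_def)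
  finally show ?thesis using assms(4) by (simp add: sum_lessThan_if_eq)
qed

lemma index_mult_Sig:
  assumes "X \<in> carrier_mat a (d l)" "i < a" "j < d (l - 1)" "dmin d L \<le> d l"
  shows "(X * Sig d L \<sigma> l) $$ (i,j) = (if j < dmin d L then X $$ (i,j) * \<sigma> $ j else 0)"
proof -
  have "(X * Sig d L \<sigma> l) $$ (i,j) = (\<Sum>k<d l. X $$ (i,k) * Sig d L \<sigma> l $$ (k,j))"
    using index_mult_mat_sum[OF assms(1) Sig_carrier assms(2,3)] .
  also have "\<dots> = (\<Sum>k<d l. if k = j then (if j < dmin d L then X $$ (i,j) * \<sigma> $ j else 0) else 0)"
    using assms by (intro sum.cong) (auto simp: Sig_def)
  finally show ?thesis using assms(4) by (simp add: sum_lessThan_if_eq)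
qed

section \<open>Frobenius norm\<close>

lemma frob_sq_nonneg: "0 \<le> frob_sq A"
  unfolding frob_sq_def by (intro sum_nonneg) auto

lemma frob_sq_eq_trace_gram:
  assumes "B \<in> carrier_mat a c"
  shows "frob_sq B = (\<Sum>j<c. (transpose_mat B * B) $$ (j,j))"
proof -
  have "(\<Sum>j<c. (transpose_mat B * B) $$ (j,j)) = (\<Sum>j<c. \<Sum>i<a. (B $$ (i,j))^2)"
    using index_mult_mat_sum[of "transpose_mat B" c a B c] assms
    by (intro sum.cong) (simp_all add: power2_eq_square)
  also have "\<dots> = (\<Sum>i<a. \<Sum>j<c. (B $$ (i,j))^2)" by (rule sum.swap)
  finally show ?thesis using assms unfolding frob_sq_def by simp
qed

lemma frob_sq_orth_mult_left:
  assumes "orth_mat n Q" "A \<in> carrier_mat n c"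
  shows "frob_sq (Q * A) = frob_sq A"
proof -
  have Q: "Q \<in> carrier_mat n n" using orth_mat_carrier[OF assms(1)] .
  have "transpose_mat (Q * A) * (Q * A) = transpose_mat A * (transpose_mat Q * (Q * A))"
    using assoc_mult_mat[of "transpose_mat A" c n "transpose_mat Q" n "Q * A" c] Q assms(2)
    by (simp add: transpose_mult[OF Q assms(2)])
  also have "\<dots> = transpose_mat A * A" using orth_mat_cancel_left[OF assms] by simp
  finally show ?thesis
    using frob_sq_eq_trace_gram[of "Q * A" n c] frob_sq_eq_trace_gram[OF assms(2)] Q assms(2) by simp
qed

lemma frob_sq_transpose: "frob_sq (transpose_mat A) = frob_sq A"
proof -
  have "frob_sq (transpose_mat A) = (\<Sum>i<dim_col A. \<Sum>j<dim_row A. (A $$ (j,i))^2)"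
    unfolding frob_sq_def by (intro sum.cong) auto
  also have "\<dots> = frob_sq A" unfolding frob_sq_def by (rule sum.swap)
  finally show ?thesis .
qed

lemma frob_sq_orth_mult_right:
  assumes "orth_mat n R" "A \<in> carrier_mat a n"
  shows "frob_sq (A * R) = frob_sq A"
proof -
  have R: "R \<in> carrier_mat n n" using orth_mat_carrier[OF assms(1)] .
  have "frob_sq (A * R) = frob_sq (transpose_mat R * transpose_mat A)"
    using frob_sq_transpose[of "A * R"] transpose_mult[OF assms(2) R] by simp
  also have "\<dots> = frob_sq A"
    using frob_sq_orth_mult_left[OF orth_mat_transpose[OF assms(1)], of "transpose_mat A" a] assms(2)
    by (simp add: frob_sq_transpose)
  finally show ?thesis .
qed

lemma frob_sq_diff:
  assumes "A \<in> carrier_mat a c" "B \<in> carrier_mat a c"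
  shows "frob_sq (A - B) = frob_sq A + frob_sq B - 2 * (\<Sum>i<a. \<Sum>j<c. A $$ (i,j) * B $$ (i,j))"
proof -
  have "frob_sq (A - B) = (\<Sum>i<a. \<Sum>j<c. (A $$ (i,j))^2 + (B $$ (i,j))^2 - 2 * (A $$ (i,j) * B $$ (i,j)))"
    unfolding frob_sq_def using assms by (intro sum.cong) (auto simp: power2_eq_square algebra_simps)
  then show ?thesis
    unfolding frob_sq_def using assms by (simp add: sum.distrib sum_subtractf sum_distrib_left)
qed

lemma frob_sq_orth_diff:
  assumes U: "orth_mat a U" and U': "orth_mat a U'" and V: "orth_mat c V" and V': "orth_mat c V'"
    and S: "S \<in> carrier_mat a c" and S': "S' \<in> carrier_mat a c"
  shows "frob_sq (U * S * V - U' * S' * V')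
       = frob_sq (S - (transpose_mat U * U') * S' * (V' * transpose_mat V))"
proof -
  have Uc: "U \<in> carrier_mat a a" and U'c: "U' \<in> carrier_mat a a"
    and Vc: "V \<in> carrier_mat c c" and V'c: "V' \<in> carrier_mat c c"
    using U U' V V' orth_mat_carrier by auto
  have Ut: "transpose_mat U \<in> carrier_mat a a" and Vt: "transpose_mat V \<in> carrier_mat c c"
    using Uc Vc by auto
  let ?X = "U * S * V" and ?X' = "U' * S' * V'"
  have X: "?X \<in> carrier_mat a c" and X': "?X' \<in> carrier_mat a c" using Uc U'c Vc V'c S S' by auto
  have "transpose_mat U * ?X = S * V"
    using assoc_mult_mat[OF Ut mult_carrier_mat[OF Uc S] Vc] orth_mat_cancel_left[OF U S] by simp
  then have e1: "(transpose_mat U * ?X) * transpose_mat V = S"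
    using orth_mat_cancel_right[OF V S] by simp
  have "(transpose_mat U * ?X') * transpose_mat V = (transpose_mat U * U') * S' * (V' * transpose_mat V)"
    using Ut U'c S' V'c Vt by (simp add: assoc_mult_mat[of _ a a _ c _ c] assoc_mult_mat[of _ a c _ c _ c]
        assoc_mult_mat[of _ a a _ a _ c])
  then have e: "(transpose_mat U * (?X - ?X')) * transpose_mat V
      = S - (transpose_mat U * U') * S' * (V' * transpose_mat V)"
    using e1 Ut X X' Vt
    by (simp add: mult_minus_distrib_mat[OF Ut X X'] minus_mult_distrib_mat[of _ a c _ _ c])
  have D: "?X - ?X' \<in> carrier_mat a c" using minus_carrier_mat[OF X'] .
  have "frob_sq (?X - ?X') = frob_sq ((transpose_mat U * (?X - ?X')) * transpose_mat V)"
    using frob_sq_orth_mult_left[OF orth_mat_transpose[OF U] D]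
      frob_sq_orth_mult_right[OF orth_mat_transpose[OF V] mult_carrier_mat[OF Ut D]]
    by simp
  then show ?thesis using e by simp
qed

section \<open>A rearrangement inequality\<close>

lemma sum_mult_nonneg_if_prefix_sums_nonneg:
  fixes x e :: "nat \<Rightarrow> real"
  shows "(\<forall>i j. i \<le> j \<longrightarrow> j < m \<longrightarrow> x j \<le> x i) \<Longrightarrow> (\<forall>i<m. 0 \<le> x i) \<Longrightarrow>
    (\<forall>t<m. 0 \<le> (\<Sum>i<Suc t. e i)) \<Longrightarrow> 0 \<le> (\<Sum>i<m. x i * e i)"
proof (induction m arbitrary: x)
  case (Suc n x)
  define x' where "x' i = x i - x n" for i
  have "0 \<le> (\<Sum>i<n. x' i * e i)"
    using Suc.prems by (intro Suc.IH) (auto simp: x'_def)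
  moreover have "0 \<le> x n * (\<Sum>i<Suc n. e i)" using Suc.prems(2,3) by simp
  moreover have "(\<Sum>i<Suc n. x i * e i) = (\<Sum>i<n. x' i * e i) + x n * (\<Sum>i<Suc n. e i)"
    by (simp add: x'_def algebra_simps sum_distrib_left sum_subtractf)
  ultimately show ?case by simp
qed simp

lemma sum_mult_le_prefix_sum:
  fixes z w :: "nat \<Rightarrow> real"
  assumes zd: "\<forall>i j. i \<le> j \<longrightarrow> j < m \<longrightarrow> z j \<le> z i" and zn: "\<forall>i<m. 0 \<le> z i"
    and t: "t < m" and w: "\<forall>k<m. 0 \<le> w k \<and> w k \<le> 1" and ws: "(\<Sum>k<m. w k) \<le> Suc t"
  shows "(\<Sum>k<m. z k * w k) \<le> (\<Sum>k<Suc t. z k)"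
proof -
  have split: "(\<Sum>k<m. f k) = (\<Sum>k<Suc t. f k) + (\<Sum>k\<in>{Suc t..<m}. f k)" for f :: "nat \<Rightarrow> real"
  proof -
    have "{..<m} = {..<Suc t} \<union> {Suc t..<m}" using t by auto
    then have "(\<Sum>k<m. f k) = (\<Sum>k\<in>{..<Suc t} \<union> {Suc t..<m}. f k)" by (simp only:)
    also have "\<dots> = (\<Sum>k<Suc t. f k) + (\<Sum>k\<in>{Suc t..<m}. f k)" by (rule sum.union_disjoint) auto
    finally show ?thesis .
  qed
  have low: "z t * (Suc t - (\<Sum>k<Suc t. w k)) \<le> (\<Sum>k<Suc t. z k) - (\<Sum>k<Suc t. z k * w k)"
  proof -
    have "z t * (Suc t - (\<Sum>k<Suc t. w k)) = (\<Sum>k<Suc t. z t * (1 - w k))"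
      by (simp add: sum_distrib_left[symmetric] sum_subtractf)
    also have "\<dots> \<le> (\<Sum>k<Suc t. z k * (1 - w k))"
      using zd w t by (intro sum_mono mult_right_mono) auto
    finally show ?thesis by (simp add: sum_subtractf algebra_simps)
  qed
  have high: "(\<Sum>k\<in>{Suc t..<m}. z k * w k) \<le> z t * (\<Sum>k\<in>{Suc t..<m}. w k)"
  proof -
    have "(\<Sum>k\<in>{Suc t..<m}. z k * w k) \<le> (\<Sum>k\<in>{Suc t..<m}. z t * w k)"
      using zd w by (intro sum_mono mult_right_mono) auto
    then show ?thesis by (simp add: sum_distrib_left)
  qed
  have "0 \<le> z t * (Suc t - (\<Sum>k<m. w k))" using zn t ws by simp
  then show ?thesis using low high split[of w] split[of "\<lambda>k. z k * w k"] by (simp add: algebra_simps)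
qed

lemma sum_mult_substochastic_le:
  fixes x z :: "nat \<Rightarrow> real" and M :: "nat \<Rightarrow> nat \<Rightarrow> real"
  assumes xd: "\<forall>i j. i \<le> j \<longrightarrow> j < m \<longrightarrow> x j \<le> x i" and xn: "\<forall>i<m. 0 \<le> x i"
    and zd: "\<forall>i j. i \<le> j \<longrightarrow> j < m \<longrightarrow> z j \<le> z i" and zn: "\<forall>i<m. 0 \<le> z i"
    and Mn: "\<forall>i k. 0 \<le> M i k"
    and rows: "\<forall>i<m. (\<Sum>k<m. M i k) \<le> 1" and cols: "\<forall>k<m. (\<Sum>i<m. M i k) \<le> 1"
  shows "(\<Sum>i<m. \<Sum>k<m. x i * z k * M i k) \<le> (\<Sum>i<m. x i * z i)"
proof -
  define c where "c i = (\<Sum>k<m. z k * M i k)" for i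
  have "0 \<le> (\<Sum>i<Suc t. z i - c i)" if t: "t < m" for t
  proof -
    define w where "w k = (\<Sum>i<Suc t. M i k)" for k
    have "(\<Sum>i<Suc t. c i) = (\<Sum>k<m. z k * w k)"
      unfolding c_def w_def by (simp only: sum_distrib_left) (rule sum.swap)
    also have "\<dots> \<le> (\<Sum>k<Suc t. z k)"
    proof (rule sum_mult_le_prefix_sum[OF zd zn t])
      have "w k \<le> (\<Sum>i<m. M i k)" for k
        unfolding w_def using t Mn by (intro sum_mono2) auto
      moreover have "0 \<le> w k" for k unfolding w_def using Mn by (simp add: sum_nonneg)
      ultimately show "\<forall>k<m. 0 \<le> w k \<and> w k \<le> 1" using cols order_trans by blast
      have "(\<Sum>k<m. w k) = (\<Sum>i<Suc t. \<Sum>k<m. M i k)" unfolding w_def by (rule sum.swap)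
      also have "\<dots> \<le> (\<Sum>i<Suc t. 1)" using rows t by (intro sum_mono) auto
      finally show "(\<Sum>k<m. w k) \<le> Suc t" by simp
    qed
    finally show ?thesis by (simp add: sum_subtractf)
  qed
  then have "0 \<le> (\<Sum>i<m. x i * (z i - c i))"
    using sum_mult_nonneg_if_prefix_sums_nonneg[OF xd xn] by blast
  moreover have "(\<Sum>i<m. \<Sum>k<m. x i * z k * M i k) = (\<Sum>i<m. x i * c i)"
    unfolding c_def by (simp add: sum_distrib_left algebra_simps)
  ultimately show ?thesis by (simp add: algebra_simps sum_subtractf)
qed

section \<open>A von Neumann trace bound for the factors \<open>\<Sigma>\<^sub>l\<close>\<close>

lemma frob_sq_Sig:
  assumes "dmin d L \<le> d l" "dmin d L \<le> d (l - 1)"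
  shows "frob_sq (Sig d L \<sigma> l) = (\<Sum>i<dmin d L. (\<sigma> $ i)^2)"
proof -
  have "frob_sq (Sig d L \<sigma> l)
      = (\<Sum>i<d l. \<Sum>j<d (l - 1). if j = i then (if i < dmin d L then (\<sigma> $ i)^2 else 0) else 0)"
    unfolding frob_sq_def by (intro sum.cong) (auto simp: Sig_def)
  also have "\<dots> = (\<Sum>i<d l. if i < dmin d L then (\<sigma> $ i)^2 else 0)"
    using assms by (intro sum.cong) (auto simp: sum_lessThan_if_eq)
  finally show ?thesis using assms by (simp add: sum_lessThan_restrict)
qed

lemma sum_Sig_mult_entries:
  assumes "dmin d L \<le> d l" "dmin d L \<le> d (l - 1)" "M \<in> carrier_mat (d l) (d (l - 1))"
  shows "(\<Sum>i<d l. \<Sum>j<d (l - 1). Sig d L \<sigma> l $$ (i,j) * M $$ (i,j)) = (\<Sum>i<dmin d L. \<sigma> $ i * M $$ (i,i))"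
proof -
  have "(\<Sum>i<d l. \<Sum>j<d (l - 1). Sig d L \<sigma> l $$ (i,j) * M $$ (i,j))
     = (\<Sum>i<d l. \<Sum>j<d (l - 1). if j = i then (if i < dmin d L then \<sigma> $ i * M $$ (i,i) else 0) else 0)"
    by (intro sum.cong) (auto simp: Sig_def)
  also have "\<dots> = (\<Sum>i<d l. if i < dmin d L then \<sigma> $ i * M $$ (i,i) else 0)"
    using assms by (intro sum.cong) (auto simp: sum_lessThan_if_eq)
  finally show ?thesis using assms by (simp add: sum_lessThan_restrict)
qed

lemma orth_mats_sq_entries_substochastic:
  assumes P: "orth_mat n P" and R: "orth_mat n' R" and m: "m \<le> n" "m \<le> n'"
  shows "\<forall>i<m. (\<Sum>k<m. ((P $$ (i,k))^2 + (R $$ (k,i))^2) / 2) \<le> 1"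
    and "\<forall>k<m. (\<Sum>i<m. ((P $$ (i,k))^2 + (R $$ (k,i))^2) / 2) \<le> 1"
proof -
  have sq_le: "(\<Sum>k<m. f k ^ 2) \<le> 1" if "m \<le> N" "(\<Sum>k<N. f k ^ 2) = 1" for f :: "nat \<Rightarrow> real" and N
    using that sum_mono2[of "{..<N}" "{..<m}" "\<lambda>k. f k ^ 2"] by auto
  show "\<forall>i<m. (\<Sum>k<m. ((P $$ (i,k))^2 + (R $$ (k,i))^2) / 2) \<le> 1"
  proof (intro allI impI)
    fix i assume "i < m"
    then have "(\<Sum>k<m. (P $$ (i,k))^2) \<le> 1" "(\<Sum>k<m. (R $$ (k,i))^2) \<le> 1"
      using sq_le[OF m(1) orth_mat_row_sum_sq[OF P]] sq_le[OF m(2) orth_mat_col_sum_sq[OF R]] m by auto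
    then show "(\<Sum>k<m. ((P $$ (i,k))^2 + (R $$ (k,i))^2) / 2) \<le> 1"
      unfolding sum_divide_distrib[symmetric] sum.distrib by simp
  qed
  show "\<forall>k<m. (\<Sum>i<m. ((P $$ (i,k))^2 + (R $$ (k,i))^2) / 2) \<le> 1"
  proof (intro allI impI)
    fix k assume "k < m"
    then have "(\<Sum>i<m. (P $$ (i,k))^2) \<le> 1" "(\<Sum>i<m. (R $$ (k,i))^2) \<le> 1"
      using sq_le[OF m(1) orth_mat_col_sum_sq[OF P]] sq_le[OF m(2) orth_mat_row_sum_sq[OF R]] m by auto
    then show "(\<Sum>i<m. ((P $$ (i,k))^2 + (R $$ (k,i))^2) / 2) \<le> 1"
      unfolding sum_divide_distrib[symmetric] sum.distrib by simp
  qed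
qed

lemma index_mult_Sig_mult_diag:
  assumes ml: "dmin d L \<le> d l" and ml': "dmin d L \<le> d (l - 1)"
    and P: "P \<in> carrier_mat (d l) (d l)" and R: "R \<in> carrier_mat (d (l - 1)) (d (l - 1))"
    and i: "i < dmin d L"
  shows "(P * Sig d L \<sigma> l * R) $$ (i,i) = (\<Sum>k<dmin d L. \<sigma> $ k * (P $$ (i,k) * R $$ (k,i)))"
proof -
  have PS: "P * Sig d L \<sigma> l \<in> carrier_mat (d l) (d (l - 1))" using P Sig_carrier by simp
  have "(P * Sig d L \<sigma> l * R) $$ (i,i) = (\<Sum>k<d (l - 1). (P * Sig d L \<sigma> l) $$ (i,k) * R $$ (k,i))"
    using index_mult_mat_sum[OF PS R] i ml ml' by simp
  also have "\<dots> = (\<Sum>k<d (l - 1). if k < dmin d L then \<sigma> $ k * (P $$ (i,k) * R $$ (k,i)) else 0)"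
    using index_mult_Sig[OF P _ _ ml] i ml by (intro sum.cong) auto
  finally show ?thesis using ml' by (simp add: sum_lessThan_restrict)
qed

lemma sum_Sig_diag_orth_le:
  assumes ml: "dmin d L \<le> d l" and ml': "dmin d L \<le> d (l - 1)"
    and P: "orth_mat (d l) P" and R: "orth_mat (d (l - 1)) R"
    and sd: "\<forall>i j. i \<le> j \<longrightarrow> j < dmin d L \<longrightarrow> \<sigma> $ j \<le> \<sigma> $ i" and sn: "\<forall>i<dmin d L. 0 \<le> \<sigma> $ i"
    and sd': "\<forall>i j. i \<le> j \<longrightarrow> j < dmin d L \<longrightarrow> \<sigma>' $ j \<le> \<sigma>' $ i" and sn': "\<forall>i<dmin d L. 0 \<le> \<sigma>' $ i"
  shows "(\<Sum>i<dmin d L. \<sigma> $ i * (P * Sig d L \<sigma>' l * R) $$ (i,i)) \<le> (\<Sum>i<dmin d L. \<sigma> $ i * \<sigma>' $ i)"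
proof -
  let ?m = "dmin d L"
  \<comment> \<open>by AM-GM, \<open>P\<^sub>i\<^sub>k R\<^sub>k\<^sub>i\<close> is dominated entrywise by a doubly substochastic matrix\<close>
  define M where "M i k = ((P $$ (i,k))^2 + (R $$ (k,i))^2) / 2" for i k
  have PR_le: "P $$ (i,k) * R $$ (k,i) \<le> M i k" for i k
  proof -
    have "0 \<le> (P $$ (i,k) - R $$ (k,i))^2" by simp
    then show ?thesis unfolding M_def by (simp add: power2_eq_square algebra_simps)
  qed
  have "(\<Sum>i<?m. \<sigma> $ i * (P * Sig d L \<sigma>' l * R) $$ (i,i))
      = (\<Sum>i<?m. \<Sum>k<?m. \<sigma> $ i * \<sigma>' $ k * (P $$ (i,k) * R $$ (k,i)))"
    using index_mult_Sig_mult_diag[OF ml ml' orth_mat_carrier[OF P] orth_mat_carrier[OF R]]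
    by (simp add: sum_distrib_left algebra_simps)
  also have "\<dots> \<le> (\<Sum>i<?m. \<Sum>k<?m. \<sigma> $ i * \<sigma>' $ k * M i k)"
    using sn sn' PR_le by (intro sum_mono mult_left_mono) auto
  also have "\<dots> \<le> (\<Sum>i<?m. \<sigma> $ i * \<sigma>' $ i)"
    using sum_mult_substochastic_le[OF sd sn sd' sn' _ orth_mats_sq_entries_substochastic[OF P R ml ml', folded M_def]]
    by (simp add: M_def)
  finally show ?thesis .
qed

lemma frob_sq_Sig_orth_diff_ge:
  assumes ml: "dmin d L \<le> d l" and ml': "dmin d L \<le> d (l - 1)"
    and U: "orth_mat (d l) U" and U': "orth_mat (d l) U'"
    and V: "orth_mat (d (l - 1)) V" and V': "orth_mat (d (l - 1)) V'"
    and sd: "\<forall>i j. i \<le> j \<longrightarrow> j < dmin d L \<longrightarrow> \<sigma> $ j \<le> \<sigma> $ i" and sn: "\<forall>i<dmin d L. 0 \<le> \<sigma> $ i"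
    and sd': "\<forall>i j. i \<le> j \<longrightarrow> j < dmin d L \<longrightarrow> \<sigma>' $ j \<le> \<sigma>' $ i" and sn': "\<forall>i<dmin d L. 0 \<le> \<sigma>' $ i"
  shows "(\<Sum>i<dmin d L. (\<sigma> $ i - \<sigma>' $ i)^2) \<le> frob_sq (U * Sig d L \<sigma> l * V - U' * Sig d L \<sigma>' l * V')"
proof -
  let ?m = "dmin d L"
  define P where "P = transpose_mat U * U'"
  define R where "R = V' * transpose_mat V"
  have P: "orth_mat (d l) P" unfolding P_def by (rule orth_mat_mult[OF orth_mat_transpose[OF U] U'])
  have R: "orth_mat (d (l - 1)) R" unfolding R_def by (rule orth_mat_mult[OF V' orth_mat_transpose[OF V]])
  let ?M = "P * Sig d L \<sigma>' l * R"
  have Mc: "?M \<in> carrier_mat (d l) (d (l - 1))"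
    using orth_mat_carrier[OF P] orth_mat_carrier[OF R] Sig_carrier by auto
  have PS: "P * Sig d L \<sigma>' l \<in> carrier_mat (d l) (d (l - 1))"
    using orth_mat_carrier[OF P] Sig_carrier by auto
  have "frob_sq ?M = frob_sq (Sig d L \<sigma>' l)"
    using frob_sq_orth_mult_right[OF R PS] frob_sq_orth_mult_left[OF P Sig_carrier[of d L \<sigma>' l]]
    by simp
  then have "frob_sq (U * Sig d L \<sigma> l * V - U' * Sig d L \<sigma>' l * V')
      = (\<Sum>i<?m. (\<sigma> $ i)^2) + (\<Sum>i<?m. (\<sigma>' $ i)^2) - 2 * (\<Sum>i<?m. \<sigma> $ i * ?M $$ (i,i))"
    using frob_sq_orth_diff[OF U U' V V' Sig_carrier Sig_carrier] frob_sq_diff[OF Sig_carrier Mc]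
      frob_sq_Sig[OF ml ml'] sum_Sig_mult_entries[OF ml ml' Mc]
    by (simp add: P_def R_def)
  also have "\<dots> \<ge> (\<Sum>i<?m. (\<sigma> $ i)^2) + (\<Sum>i<?m. (\<sigma>' $ i)^2) - 2 * (\<Sum>i<?m. \<sigma> $ i * \<sigma>' $ i)"
    using sum_Sig_diag_orth_le[OF ml ml' P R sd sn sd' sn'] by simp
  moreover have "(\<Sum>i<?m. (\<sigma> $ i)^2) + (\<Sum>i<?m. (\<sigma>' $ i)^2) - 2 * (\<Sum>i<?m. \<sigma> $ i * \<sigma>' $ i)
      = (\<Sum>i<?m. (\<sigma> $ i - \<sigma>' $ i)^2)"
    by (simp add: power2_diff sum.distrib sum_subtractf sum_distrib_left algebra_simps)
  ultimately show ?thesis by linarith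
qed

section \<open>Colour-preserving permutations\<close>

lemma ex_bij_betw_preserving:
  fixes c :: "'a \<Rightarrow> 'b"
  assumes "finite A" "finite B" "\<And>v. card {x \<in> A. c x = v} = card {x \<in> B. c x = v}"
  shows "\<exists>h. bij_betw h A B \<and> (\<forall>x\<in>A. c (h x) = c x)"
proof -
  have "\<exists>h. bij_betw h {x \<in> A. c x = v} {x \<in> B. c x = v}" for v
    using assms by (intro finite_same_card_bij) auto
  then obtain H where H: "\<And>v. bij_betw (H v) {x \<in> A. c x = v} {x \<in> B. c x = v}" by metis
  define h where "h x = H (c x) x" for x
  have maps: "h x \<in> B \<and> c (h x) = c x" if "x \<in> A" for x
    using bij_betw_apply[OF H[of "c x"]] that by (auto simp: h_def)
  have "inj_on h A"
  proof (rule inj_onI)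
    fix x x' assume x: "x \<in> A" "x' \<in> A" "h x = h x'"
    then have "c x = c x'" using maps by metis
    then show "x = x'" using x bij_betw_imp_inj_on[OF H[of "c x"]] by (auto simp: h_def inj_on_def)
  qed
  moreover have "h ` A = B"
  proof
    show "h ` A \<subseteq> B" using maps by auto
    show "B \<subseteq> h ` A"
    proof
      fix z assume "z \<in> B"
      then obtain x where "x \<in> A" "c x = c z" "z = H (c z) x"
        using bij_betw_imp_surj_on[OF H[of "c z"]] by force
      then have "z = h x" by (simp add: h_def)
      then show "z \<in> h ` A" using \<open>x \<in> A\<close> by blast
    qed
  qed
  ultimately show ?thesis using maps by (auto simp: bij_betw_def)
qed

lemma permutes_extend_preserving:
  fixes c :: "'a \<Rightarrow> 'b"
  assumes U: "finite U" and SU: "S \<subseteq> U" and inj: "inj_on phi S" and img: "phi ` S \<subseteq> U"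
    and pres: "\<forall>j\<in>S. c (phi j) = c j"
  shows "\<exists>g. g permutes U \<and> (\<forall>j\<in>S. g j = phi j) \<and> (\<forall>j\<in>U. c (g j) = c j)"
proof -
  have card_eq: "card {x \<in> U - S. c x = v} = card {x \<in> U - phi ` S. c x = v}" for v
  proof -
    let ?C = "{x \<in> U. c x = v}" and ?D = "{x \<in> S. c x = v}"
    have fin: "finite ?C" "finite ?D" using U finite_subset[OF SU U] by auto
    have "{x \<in> U - S. c x = v} = ?C - ?D" "{x \<in> U - phi ` S. c x = v} = ?C - phi ` ?D"
      using pres by auto
    moreover have "?D \<subseteq> ?C" "phi ` ?D \<subseteq> ?C" using SU img pres by auto
    moreover have "card (phi ` ?D) = card ?D" using inj by (intro card_image) (auto intro: inj_on_subset)
    ultimately show ?thesis using fin by (simp add: card_Diff_subset)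
  qed
  obtain h where h: "bij_betw h (U - S) (U - phi ` S)" "\<forall>x\<in>U - S. c (h x) = c x"
    using ex_bij_betw_preserving[OF _ _ card_eq] U by blast
  define g where "g x = (if x \<in> U then (if x \<in> S then phi x else h x) else x)" for x
  have "bij_betw (\<lambda>x. if x \<in> S then phi x else h x) (S \<union> (U - S)) (phi ` S \<union> (U - phi ` S))"
    using inj h(1) by (intro bij_betw_disjoint_Un) (auto simp: bij_betw_def)
  then have "bij_betw g U U"
    using SU img by (auto simp: g_def Un_absorb1 Un_Diff_cancel intro: bij_betw_cong[THEN iffD1])
  then have "g permutes U" by (rule bij_imp_permutes) (simp add: g_def)
  moreover have "\<forall>j\<in>U. c (g j) = c j" using pres h(2) by (auto simp: g_def)
  ultimately show ?thesis using SU by (intro exI[of _ g]) (auto simp: g_def)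
qed

section \<open>The multiplicity structure of \<open>y\<close>\<close>

definition drop_points :: "nat \<Rightarrow> (nat \<Rightarrow> real) \<Rightarrow> nat set" where
  "drop_points m y = {j. 1 \<le> j \<and> j \<le> rY m y \<and> yext m y (j - 1) > yext m y j}"

definition block_sizes :: "nat \<Rightarrow> (nat \<Rightarrow> real) \<Rightarrow> nat list" where
  "block_sizes m y = map (hY m y) [1..<Suc (pY m y)]"

lemma length_block_sizes: "length (block_sizes m y) = pY m y"
  by (simp add: block_sizes_def)

lemma nth_block_sizes: "k < pY m y \<Longrightarrow> block_sizes m y ! k = hY m y (Suc k)"
  by (simp add: block_sizes_def del: upt_Suc)

lemma sum_list_map_diff_telescope:
  "(\<forall>k<q. f k \<le> f (Suc k)) \<Longrightarrow>
   sum_list (map (\<lambda>k. f k - f (k - 1)) [1..<Suc q]) = f q - (f 0 :: nat)"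
proof (induction q)
  case (Suc q)
  have "f 0 \<le> f q" using Suc.prems by (induction q) (auto intro: order_trans)
  then show ?case using Suc by simp
qed simp

context
  fixes m :: nat and y :: "nat \<Rightarrow> real"
  assumes y_antimono: "\<forall>i j. i \<le> j \<longrightarrow> j < m \<longrightarrow> y j \<le> y i"
    and y_nonneg: "\<forall>i<m. y i \<ge> 0"
begin

lemma rY_le_and_pos_iff: "rY m y \<le> m \<and> (\<forall>i<m. 0 < y i \<longleftrightarrow> i < rY m y)"
proof (cases "{i. i < m \<and> y i > 0} = {}")
  case True
  then have "rY m y = 0" unfolding rY_def by (simp only: card.empty)
  then show ?thesis using True by auto
next
  case False
  let ?S = "{i. i < m \<and> y i > 0}"
  define M where "M = Max ?S"
  have M: "M < m" "y M > 0" using Max_in[OF _ False] M_def by auto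
  have S: "?S = {..M}"
  proof
    show "?S \<subseteq> {..M}" using Max_ge[of ?S] M_def by auto
    show "{..M} \<subseteq> ?S" using M y_antimono by (auto intro: less_le_trans)
  qed
  have "i < m \<Longrightarrow> 0 < y i \<longleftrightarrow> i < Suc M" for i
    using S by (auto simp: set_eq_iff less_Suc_eq_le)
  then show ?thesis using M(1) unfolding rY_def S by simp
qed

lemma rY_le: "rY m y \<le> m"
  using rY_le_and_pos_iff by simp

lemma pos_iff_lt_rY: "i < m \<Longrightarrow> 0 < y i \<longleftrightarrow> i < rY m y"
  using rY_le_and_pos_iff by simp

lemma eq_0_if_ge_rY: "rY m y \<le> i \<Longrightarrow> i < m \<Longrightarrow> y i = 0"
  using pos_iff_lt_rY[of i] y_nonneg by force

lemma yext_rY: "yext m y (rY m y) = 0"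
  using eq_0_if_ge_rY[of "rY m y"] by (auto simp: yext_def)

lemma finite_drop_points: "finite (drop_points m y)"
  unfolding drop_points_def by (rule finite_subset[of _ "{..rY m y}"]) auto

lemma drop_points_bounds: "j \<in> drop_points m y \<Longrightarrow> 1 \<le> j \<and> j \<le> rY m y"
  unfolding drop_points_def by auto

lemma rY_in_drop_points: "0 < rY m y \<Longrightarrow> rY m y \<in> drop_points m y"
  using pos_iff_lt_rY[of "rY m y - 1"] rY_le yext_rY by (simp add: drop_points_def yext_def)

lemma inj_on_drop_points: "inj_on (\<lambda>j. y (j - 1)) (drop_points m y)"
proof -
  have lt: "y (j' - 1) < y (j - 1)" if "j \<in> drop_points m y" "j' \<in> drop_points m y" "j < j'" for j j'
  proof -
    have "yext m y j < yext m y (j - 1)" using that(1) by (simp add: drop_points_def)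
    moreover have "j < m" using that(2,3) drop_points_bounds[of j'] rY_le by linarith
    ultimately have "y j < y (j - 1)" by (simp add: yext_def split: if_splits)
    moreover have "y (j' - 1) \<le> y j"
      using that drop_points_bounds[of j'] rY_le y_antimono by auto
    ultimately show ?thesis by linarith
  qed
  show ?thesis
    by (rule inj_onI, rule ccontr) (metis lt linorder_neqE_nat less_irrefl)
qed

lemma image_drop_points: "(\<lambda>j. y (j - 1)) ` drop_points m y = {y i | i. i < m \<and> y i > 0}"
proof
  show "(\<lambda>j. y (j - 1)) ` drop_points m y \<subseteq> {y i | i. i < m \<and> y i > 0}"
    using drop_points_bounds rY_le pos_iff_lt_rY by fastforce
  show "{y i | i. i < m \<and> y i > 0} \<subseteq> (\<lambda>j. y (j - 1)) ` drop_points m y"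
  proof
    fix v assume "v \<in> {y i | i. i < m \<and> y i > 0}"
    then obtain i where i: "i < m" "y i > 0" "v = y i" by auto
    let ?T = "{t. t < rY m y \<and> y t = v}"
    have T: "finite ?T" "i \<in> ?T" using pos_iff_lt_rY i by auto
    define t where "t = Max ?T"
    have "t \<in> ?T" unfolding t_def using Max_in[OF T(1)] T(2) by blast
    then have t: "t < rY m y" "y t = v" by auto
    \<comment> \<open>the last index of the value \<open>v\<close> is followed by a drop\<close>
    have "yext m y (Suc t) < v"
    proof (cases "Suc t < rY m y")
      case True
      have "Suc t \<notin> ?T"
      proof
        assume "Suc t \<in> ?T"
        then have "Suc t \<le> t" unfolding t_def by (rule Max_ge[OF T(1)])
        then show False by simp
      qed
      then have "y (Suc t) \<noteq> v" using True by simp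
      moreover have "y (Suc t) \<le> y t" using y_antimono True rY_le by simp
      ultimately show ?thesis using True rY_le t by (simp add: yext_def)
    next
      case False
      then have "Suc t = rY m y" using t by simp
      then show ?thesis using yext_rY i t by simp
    qed
    moreover have "yext m y t = v" using t rY_le by (simp add: yext_def)
    ultimately have "Suc t \<in> drop_points m y" using t by (simp add: drop_points_def)
    then show "v \<in> (\<lambda>j. y (j - 1)) ` drop_points m y" using t by force
  qed
qed

lemma card_drop_points: "card (drop_points m y) = pY m y"
  using card_image[OF inj_on_drop_points] image_drop_points by (simp add: pY_def)

lemma sY_eq_nth: "sY m y k = (0 # sorted_list_of_set (drop_points m y)) ! k"
  by (simp add: sY_def drop_points_def)

lemma sY_0: "sY m y 0 = 0"
  by (simp add: sY_eq_nth)

lemma sY_Suc_in_drop_points: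
  assumes "k < pY m y"
  shows "sY m y (Suc k) \<in> drop_points m y"
proof -
  have "sorted_list_of_set (drop_points m y) ! k \<in> set (sorted_list_of_set (drop_points m y))"
    using assms card_drop_points by (intro nth_mem) simp
  then show ?thesis using finite_drop_points by (simp add: sY_eq_nth)
qed

lemma sY_mono: "k \<le> k' \<Longrightarrow> k' \<le> pY m y \<Longrightarrow> sY m y k \<le> sY m y k'"
proof (cases k)
  case (Suc k0)
  assume "k \<le> k'" "k' \<le> pY m y"
  then obtain k0' where "k' = Suc k0'" "k0 \<le> k0'" "k0' < pY m y" using Suc by (cases k') auto
  then show ?thesis
    using Suc sorted_nth_mono[OF sorted_sorted_list_of_set, of k0 k0' "drop_points m y"]
      card_drop_points finite_drop_points
    by (simp add: sY_eq_nth)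
qed (simp add: sY_0)

lemma sY_pY: "sY m y (pY m y) = rY m y"
proof (cases "pY m y = 0")
  case True
  then have "drop_points m y = {}" using card_drop_points finite_drop_points by simp
  then have "rY m y = 0" using rY_in_drop_points by auto
  then show ?thesis using True by (simp add: sY_0)
next
  case False
  let ?xs = "sorted_list_of_set (drop_points m y)"
  have len: "length ?xs = pY m y" using card_drop_points by simp
  have last: "sY m y (pY m y) = ?xs ! (pY m y - 1)" using False by (simp add: sY_eq_nth)
  then have le: "sY m y (pY m y) \<le> rY m y"
    using sY_Suc_in_drop_points[of "pY m y - 1"] False drop_points_bounds by simp
  then have "0 < rY m y" using sY_Suc_in_drop_points[of "pY m y - 1"] False drop_points_bounds by fastforce
  then obtain t where t: "t < pY m y" "?xs ! t = rY m y"
    using rY_in_drop_points finite_drop_points len by (metis in_set_conv_nth set_sorted_list_of_set)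
  have "?xs ! t \<le> ?xs ! (pY m y - 1)"
    using t len by (intro sorted_nth_mono) auto
  then show ?thesis using le t last by simp
qed

lemma sum_take_block_sizes: "k \<le> pY m y \<Longrightarrow> sum_list (take k (block_sizes m y)) = sY m y k"
proof -
  assume k: "k \<le> pY m y"
  have "take k [1..<Suc (pY m y)] = [1..<Suc k]" using take_upt[of 1 k "Suc (pY m y)"] k by (simp del: upt_Suc)
  then have "take k (block_sizes m y) = map (\<lambda>k. sY m y k - sY m y (k - 1)) [1..<Suc k]"
    by (simp add: block_sizes_def hY_def take_map)
  also have "sum_list \<dots> = sY m y k - sY m y 0"
    using k sY_mono by (intro sum_list_map_diff_telescope) auto
  finally show ?thesis by (simp add: sY_0)
qed

lemma sum_block_sizes: "sum_list (block_sizes m y) = rY m y"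
  using sum_take_block_sizes[of "pY m y"] length_block_sizes sY_pY by simp

lemma block_of_block_sizes:
  "k < pY m y \<Longrightarrow> sY m y k \<le> i \<Longrightarrow> i < sY m y (Suc k) \<Longrightarrow> block_of (block_sizes m y) i = k"
  using block_ofI[of k "block_sizes m y" i] sum_take_block_sizes[of k] sum_take_block_sizes[of "Suc k"]
    length_block_sizes by simp

lemma ex_block_containing: "i < rY m y \<Longrightarrow> \<exists>k<pY m y. sY m y k \<le> i \<and> i < sY m y (Suc k)"
proof -
  assume i: "i < rY m y"
  let ?K = "{k. k \<le> pY m y \<and> sY m y k \<le> i}"
  define k where "k = Max ?K"
  have "k \<in> ?K" using Max_in[of ?K] sY_0 k_def by fastforce
  then have k: "k < pY m y" "sY m y k \<le> i" using sY_pY i by (auto simp: le_less)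
  have "Suc k \<notin> ?K"
  proof
    assume "Suc k \<in> ?K"
    then have "Suc k \<le> k" unfolding k_def by (rule Max_ge[rotated]) simp
    then show False by simp
  qed
  then show ?thesis using k by auto
qed

lemma block_of_eq_if_y_eq:
  assumes "i < rY m y" "j < rY m y" "y i = y j"
  shows "block_of (block_sizes m y) i = block_of (block_sizes m y) j"
proof -
  have "block_of (block_sizes m y) a = block_of (block_sizes m y) b"
    if ab: "a < b" "b < rY m y" "y a = y b" for a b
  proof -
    obtain k where k: "k < pY m y" "sY m y k \<le> a" "a < sY m y (Suc k)"
      using ex_block_containing[of a] ab by auto
    obtain k' where k': "k' < pY m y" "sY m y k' \<le> b" "b < sY m y (Suc k')"
      using ex_block_containing[OF ab(2)] by blast
    have "\<not> k < k'"
    proof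
      assume "k < k'"
      define t where "t = sY m y (Suc k)"
      have tD: "t \<in> drop_points m y" using sY_Suc_in_drop_points k(1) t_def by simp
      have tb: "t \<le> b" using sY_mono[of "Suc k" k'] \<open>k < k'\<close> k' t_def by simp
      have "y t < y (t - 1)"
        using tD tb ab rY_le drop_points_bounds[OF tD]
        by (simp add: drop_points_def yext_def split: if_splits)
      moreover have "a \<le> t - 1" "t - 1 < m" using k t_def tb ab rY_le by auto
      then have "y (t - 1) \<le> y a" using y_antimono by blast
      moreover have "y b \<le> y t" using y_antimono tb ab rY_le by simp
      ultimately show False using ab(3) by simp
    qed
    moreover have "\<not> k' < k" using sY_mono[of "Suc k'" k] k k' ab by auto
    ultimately show ?thesis using block_of_block_sizes k k' by (metis linorder_neqE_nat)
  qed
  then show ?thesis using assms by (metis linorder_neqE_nat)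
qed

text \<open>Since it preserves \<open>y\<close>, the permutation \<open>g\<close> maps each block of equal positive entries
  onto itself and the zero entries among themselves.\<close>

lemma index_pad_permmat_eq_0_if_blocks_differ:
  assumes g: "g permutes {..<m}" and gy: "\<forall>j<m. y (g j) = y j" and mN: "m \<le> N"
    and ij: "i < N" "j < N"
    and b: "block_of (block_sizes m y @ [N - rY m y]) i \<noteq> block_of (block_sizes m y @ [N - rY m y]) j"
  shows "pad_mat N m (permmat m g) $$ (i,j) = 0"
proof (cases "i < m \<and> j < m")
  case True
  let ?ns = "block_sizes m y"
  have blk_lo: "k < rY m y \<Longrightarrow> block_of (?ns @ [N - rY m y]) k = block_of ?ns k" for k
    using block_of_append_left[of k ?ns] sum_block_sizes by simp
  have blk_hi: "rY m y \<le> k \<Longrightarrow> k < N \<Longrightarrow> block_of (?ns @ [N - rY m y]) k = length ?ns" for k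
    using block_of_snoc_last[of ?ns k "N - rY m y"] sum_block_sizes rY_le mN by simp
  have "i \<noteq> g j"
  proof
    assume "i = g j"
    then have yij: "y i = y j" using gy True by simp
    show False
    proof (cases "j < rY m y")
      case True
      then have "i < rY m y" using pos_iff_lt_rY \<open>i < m \<and> j < m\<close> yij by metis
      then show False using b blk_lo block_of_eq_if_y_eq[OF _ True yij] True by simp
    next
      case False
      then have "\<not> i < rY m y" using pos_iff_lt_rY \<open>i < m \<and> j < m\<close> yij by metis
      then show False using b blk_hi False ij by simp
    qed
  qed
  then show ?thesis using index_pad_mat[OF permmat_carrier mN ij] True by simp
next
  case False
  then show ?thesis using index_pad_mat[OF permmat_carrier mN ij] b by auto
qed

lemma pad_permmat_eq_blkdiag:
  fixes N :: nat and g :: "nat \<Rightarrow> nat"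
  assumes g: "g permutes {..<m}" and gy: "\<forall>j<m. y (g j) = y j" and mN: "m \<le> N"
  shows "\<exists>As C. orth_blocks As (block_sizes m y) \<and> orth_mat (N - rY m y) C \<and>
     pad_mat N m (permmat m g) = blkdiag (As @ [C]) \<and>
     blkdiag As = mat (rY m y) (rY m y) (\<lambda>(i,j). if i = g j then 1 else 0)"
proof -
  let ?ns = "block_sizes m y"
  let ?nz = "?ns @ [N - rY m y]"
  let ?F = "pad_mat N m (permmat m g)"
  have rm: "rY m y \<le> m" using rY_le .
  have sum_nz: "sum_list ?nz = N" using sum_block_sizes rm mN by simp
  have Fc: "?F \<in> carrier_mat N N" using pad_mat_carrier[OF permmat_carrier mN] .
  note index_pad_permmat_eq_0_if_blocks_differ[OF g gy mN]
  then obtain Ps where Ps: "square_blocks Ps ?nz" "?F = blkdiag Ps"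
    using blkdiag_if_block_supported[of ?F ?nz] Fc sum_nz by auto
  have oPs: "orth_blocks Ps ?nz"
    using orth_blocks_if_orth_mat_blkdiag[OF Ps(1)] orth_mat_pad_mat[OF orth_mat_permmat[OF g] mN]
      Ps(2) sum_nz by simp
  have "length Ps = Suc (length ?ns)" using Ps(1) by (simp add: square_blocks_def)
  then obtain As C where AC: "Ps = As @ [C]"
    by (metis append_butlast_last_id length_0_conv nat.distinct(1))
  have sA: "square_blocks As ?ns" and cC: "C \<in> carrier_mat (N - rY m y) (N - rY m y)"
    using Ps(1) AC square_blocks_snoc by auto
  have oA: "orth_blocks As ?ns" and oC: "orth_mat (N - rY m y) C" using oPs AC orth_blocks_snoc by auto
  have bA: "blkdiag As \<in> carrier_mat (rY m y) (rY m y)" using blkdiag_carrier[OF sA] sum_block_sizes by simp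
  have F4: "?F = four_block_mat (blkdiag As) (0\<^sub>m (rY m y) (N - rY m y)) (0\<^sub>m (N - rY m y) (rY m y)) C"
    using blkdiag_snoc[OF sA cC] Ps(2) AC sum_block_sizes by simp
  have "blkdiag As = mat (rY m y) (rY m y) (\<lambda>(i,j). if i = g j then 1 else 0)"
  proof (rule eq_matI)
    fix i j assume "i < dim_row (mat (rY m y) (rY m y) (\<lambda>(i,j). if i = g j then (1::real) else 0))"
      "j < dim_col (mat (rY m y) (rY m y) (\<lambda>(i,j). if i = g j then (1::real) else 0))"
    then have ij: "i < rY m y" "j < rY m y" by auto
    have "?F $$ (i,j) = blkdiag As $$ (i,j)" using F4 ij bA cC by simp
    moreover have "?F $$ (i,j) = (if i = g j then 1 else 0)"
      using index_pad_mat[OF permmat_carrier mN, of i j] ij rm mN by simp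
    ultimately show "blkdiag As $$ (i,j) = mat (rY m y) (rY m y) (\<lambda>(i,j). if i = g j then 1 else 0) $$ (i,j)"
      using ij by simp
  qed (use bA in auto)
  then show ?thesis using oA oC Ps(2) AC by blast
qed

end

section \<open>The sets \<open>\<W>\<close>\<close>

lemma Wset_iff_blocks:
  fixes d L y \<sigma> Pm
  defines "m \<equiv> dmin d L" and "r \<equiv> rY (dmin d L) y"
  shows "W \<in> Wset d L y \<sigma> Pm \<longleftrightarrow> length W = L \<and>
    (\<exists>Q Os O0 OL. (\<forall>l\<in>{2..L}. orth_mat (d (l - 1)) (Q l)) \<and>
       orth_blocks Os (block_sizes m y) \<and> orth_mat (d 0 - r) O0 \<and> orth_mat (d L - r) OL \<and>
       W ! 0 = Q 2 * Sig d L \<sigma> 1 * pad_mat (d 0) m Pm * blkdiag (Os @ [O0]) \<and>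
       (\<forall>l\<in>{2..L - 1}. W ! (l - 1) = Q (l + 1) * Sig d L \<sigma> l * transpose_mat (Q l)) \<and>
       W ! (L - 1) = blkdiag (map transpose_mat (Os @ [OL])) * pad_mat (d L) m (transpose_mat Pm)
                     * Sig d L \<sigma> L * transpose_mat (Q L))"
    (is "_ \<longleftrightarrow> _ \<and> (\<exists>Q Os O0 OL. ?P Q Os O0 OL)")
proof -
  let ?p = "pY m y"
  have Ob_blocks: "orth_blocks (map Ob [1..<Suc ?p]) (block_sizes m y) \<longleftrightarrow>
      (\<forall>k\<in>{1..?p}. orth_mat (hY m y k) (Ob k))" for Ob
  proof -
    have "(\<forall>k\<in>{1..?p}. orth_mat (hY m y k) (Ob k)) \<longleftrightarrow> (\<forall>k<?p. orth_mat (hY m y (Suc k)) (Ob (Suc k)))"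
      unfolding image_Suc_lessThan[symmetric] by auto
    then show ?thesis
      by (simp add: orth_blocks_def length_block_sizes nth_block_sizes del: upt_Suc)
  qed
  have "(\<exists>Q Ob Oh. (\<forall>l\<in>{2..L}. orth_mat (d (l - 1)) (Q l)) \<and>
          (\<forall>k\<in>{1..?p}. orth_mat (hY m y k) (Ob k)) \<and>
          orth_mat (d 0 - r) (Ob (?p + 1)) \<and> orth_mat (d L - r) Oh \<and>
          W ! 0 = Q 2 * Sig d L \<sigma> 1 * pad_mat (d 0) m Pm * blkdiag (map Ob [1..<?p + 2]) \<and>
          (\<forall>l\<in>{2..L - 1}. W ! (l - 1) = Q (l + 1) * Sig d L \<sigma> l * transpose_mat (Q l)) \<and>
          W ! (L - 1) = blkdiag (map (\<lambda>k. transpose_mat (Ob k)) [1..<?p + 1] @ [transpose_mat Oh])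
                  * pad_mat (d L) m (transpose_mat Pm) * Sig d L \<sigma> L * transpose_mat (Q L))
      \<longleftrightarrow> (\<exists>Q Os O0 OL. ?P Q Os O0 OL)" (is "(\<exists>Q Ob Oh. ?R Q Ob Oh) \<longleftrightarrow> _")
  proof
    assume "\<exists>Q Ob Oh. ?R Q Ob Oh"
    then obtain Q Ob Oh where R: "?R Q Ob Oh" by blast
    then have "?P Q (map Ob [1..<Suc ?p]) (Ob (Suc ?p)) Oh"
      using Ob_blocks by (simp del: upt_Suc add: upt_Suc_append comp_def)
    then show "\<exists>Q Os O0 OL. ?P Q Os O0 OL" by blast
  next
    assume "\<exists>Q Os O0 OL. ?P Q Os O0 OL"
    then obtain Q Os O0 OL where P: "?P Q Os O0 OL" by blast
    define Ob where "Ob k = (if k \<le> ?p then Os ! (k - 1) else O0)" for k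
    have len: "length Os = ?p" using P by (simp add: orth_blocks_def length_block_sizes)
    have Os: "map Ob [1..<Suc ?p] = Os" using len by (intro nth_equalityI) (auto simp: Ob_def simp del: upt_Suc)
    have "map Ob [1..<?p + 2] = Os @ [O0]"
      using Os by (simp del: upt_Suc add: upt_Suc_append Ob_def)
    moreover have "map (\<lambda>k. transpose_mat (Ob k)) [1..<?p + 1] @ [transpose_mat OL] = map transpose_mat (Os @ [OL])"
      using Os[symmetric] by simp
    ultimately have "?R Q Ob OL"
      using P Ob_blocks[of Ob] Os by (simp add: Ob_def del: upt_Suc)
    then show "\<exists>Q Ob Oh. ?R Q Ob Oh" by blast
  qed
  then show ?thesis by (simp add: Wset_def Let_def pad_mat_def m_def r_def)
qed

lemma map2_mult_map_transpose:
  "square_blocks As ns \<Longrightarrow> square_blocks Bs ns \<Longrightarrow>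
   map2 (*) (map transpose_mat Bs) (map transpose_mat As) = map transpose_mat (map2 (*) As Bs)"
proof (rule nth_equalityI)
  fix k assume "square_blocks As ns" "square_blocks Bs ns"
    "k < length (map2 (*) (map transpose_mat Bs) (map transpose_mat As))"
  then show "map2 (*) (map transpose_mat Bs) (map transpose_mat As) ! k = map transpose_mat (map2 (*) As Bs) ! k"
    using transpose_mult[of "As ! k" "ns ! k" "ns ! k" "Bs ! k" "ns ! k"] by (simp add: square_blocks_def)
qed (simp add: square_blocks_def)

lemma pad_permmat_comp:
  assumes "\<forall>j<m. g j < m" "m \<le> N"
  shows "pad_mat N m (permmat m (f \<circ> g)) = pad_mat N m (permmat m f) * pad_mat N m (permmat m g)"
  using pad_mat_mult[OF permmat_carrier permmat_carrier assms(2)] permmat_mult[OF assms(1)] by simp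

lemma pad_transpose_permmat_comp:
  assumes "\<forall>j<m. g j < m" "m \<le> N"
  shows "pad_mat N m (transpose_mat (permmat m (f \<circ> g)))
       = transpose_mat (pad_mat N m (permmat m g)) * pad_mat N m (transpose_mat (permmat m f))"
  using pad_mat_mult[of "transpose_mat (permmat m g)" m "transpose_mat (permmat m f)" N] assms
    permmat_mult[OF assms(1), of f] transpose_mult[OF permmat_carrier permmat_carrier, of m f g]
    transpose_pad_mat[OF permmat_carrier]
  by simp

lemma mult_pad_permmat_comp_blkdiag:
  assumes X: "X \<in> carrier_mat a N" and gm: "\<forall>j<m. g j < m" and mN: "m \<le> N"
    and G: "pad_mat N m (permmat m g) = blkdiag (As @ [C])"
    and sAC: "square_blocks (As @ [C]) ns" and sO: "square_blocks (Os @ [B]) ns" and N: "sum_list ns = N"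
  shows "X * pad_mat N m (permmat m (f \<circ> g)) * blkdiag (Os @ [B])
       = X * pad_mat N m (permmat m f) * blkdiag (map2 (*) As Os @ [C * B])"
proof -
  have F: "pad_mat N m (permmat m f) \<in> carrier_mat N N"
    and Gc: "pad_mat N m (permmat m g) \<in> carrier_mat N N"
    and B: "blkdiag (Os @ [B]) \<in> carrier_mat N N"
    using pad_mat_carrier[OF _ mN] blkdiag_carrier[OF sO] N by auto
  have "X * pad_mat N m (permmat m (f \<circ> g)) * blkdiag (Os @ [B])
      = X * pad_mat N m (permmat m f) * (pad_mat N m (permmat m g) * blkdiag (Os @ [B]))"
    unfolding pad_permmat_comp[OF gm mN]
    by (simp only: assoc_mult_mat[OF mult_carrier_mat[OF X F] Gc B, symmetric] assoc_mult_mat[OF X F Gc])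
  also have "pad_mat N m (permmat m g) * blkdiag (Os @ [B]) = blkdiag (map2 (*) As Os @ [C * B])"
    using blkdiag_mult[OF sAC sO] G sAC sO by (simp add: square_blocks_def)
  finally show ?thesis .
qed

lemma blkdiag_transpose_mult_pad_permmat_comp:
  assumes gm: "\<forall>j<m. g j < m" and mN: "m \<le> N"
    and G: "pad_mat N m (permmat m g) = blkdiag (As @ [C])"
    and sAC: "square_blocks (As @ [C]) ns" and sO: "square_blocks (Os @ [B]) ns" and N: "sum_list ns = N"
  shows "blkdiag (map transpose_mat (Os @ [B])) * pad_mat N m (transpose_mat (permmat m (f \<circ> g)))
       = blkdiag (map transpose_mat (map2 (*) As Os @ [C * B])) * pad_mat N m (transpose_mat (permmat m f))"
proof -
  have B: "blkdiag (map transpose_mat (Os @ [B])) \<in> carrier_mat N N"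
    and Gt: "transpose_mat (pad_mat N m (permmat m g)) \<in> carrier_mat N N"
    and F: "pad_mat N m (transpose_mat (permmat m f)) \<in> carrier_mat N N"
    using blkdiag_carrier[OF square_blocks_map_transpose[OF sO]] pad_mat_carrier[OF _ mN] N by auto
  have eq: "blkdiag (map transpose_mat (Os @ [B])) * transpose_mat (pad_mat N m (permmat m g))
      = blkdiag (map transpose_mat (map2 (*) As Os @ [C * B]))"
    using blkdiag_mult[OF square_blocks_map_transpose[OF sO] square_blocks_map_transpose[OF sAC]]
      transpose_blkdiag[OF sAC] G map2_mult_map_transpose[OF sAC sO] sAC sO
    by (simp add: square_blocks_def)
  show ?thesis
    unfolding pad_transpose_permmat_comp[OF gm mN] assoc_mult_mat[OF B Gt F, symmetric] by (simp only: eq)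
qed

text \<open>A \<open>y\<close>-preserving permutation \<open>g\<close> of the singular values is absorbed into the orthogonal
  blocks \<open>O\<^sub>k\<close>.\<close>

lemma Wset_comp_subset:
  fixes L :: nat and d :: "nat \<Rightarrow> nat" and y :: "nat \<Rightarrow> real"
  defines "m \<equiv> dmin d L"
  assumes L2: "2 \<le> L"
    and ys: "\<forall>i j. i \<le> j \<longrightarrow> j < m \<longrightarrow> y j \<le> y i" and ynn: "\<forall>i<m. y i \<ge> 0"
    and g: "g permutes {..<m}" and gy: "\<forall>j<m. y (g j) = y j"
  shows "Wset d L y \<sigma> (permmat m (f \<circ> g)) \<subseteq> Wset d L y \<sigma> (permmat m f)"
proof
  let ?r = "rY m y" and ?ns = "block_sizes m y"
  have m0: "m \<le> d 0" and mL: "m \<le> d L" by (auto simp: m_def dmin_def)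
  have gm: "\<forall>j<m. g j < m" using permutes_lessThan[OF g] by blast
  obtain As C0 where D0: "orth_blocks As ?ns" "orth_mat (d 0 - ?r) C0"
      "pad_mat (d 0) m (permmat m g) = blkdiag (As @ [C0])"
      "blkdiag As = mat ?r ?r (\<lambda>(i,j). if i = g j then 1 else 0)"
    using pad_permmat_eq_blkdiag[OF ys ynn g gy m0] by blast
  obtain AsL CL where DL: "orth_blocks AsL ?ns" "orth_mat (d L - ?r) CL"
      "pad_mat (d L) m (permmat m g) = blkdiag (AsL @ [CL])"
      "blkdiag AsL = mat ?r ?r (\<lambda>(i,j). if i = g j then 1 else 0)"
    using pad_permmat_eq_blkdiag[OF ys ynn g gy mL] by blast
  have sA: "square_blocks As ?ns" using orth_blocks_square_blocks[OF D0(1)] .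
  have "AsL = As" using blkdiag_inj[OF orth_blocks_square_blocks[OF DL(1)] sA] DL(4) D0(4) by simp
  note DL = DL[unfolded this]
  fix W assume "W \<in> Wset d L y \<sigma> (permmat m (f \<circ> g))"
  then obtain Q Os O0 OL where len: "length W = L" and
    WQ: "\<forall>l\<in>{2..L}. orth_mat (d (l - 1)) (Q l)"
      "orth_blocks Os ?ns" "orth_mat (d 0 - ?r) O0" "orth_mat (d L - ?r) OL"
      "W ! 0 = Q 2 * Sig d L \<sigma> 1 * pad_mat (d 0) m (permmat m (f \<circ> g)) * blkdiag (Os @ [O0])"
      "\<forall>l\<in>{2..L - 1}. W ! (l - 1) = Q (l + 1) * Sig d L \<sigma> l * transpose_mat (Q l)"
      "W ! (L - 1) = blkdiag (map transpose_mat (Os @ [OL]))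
                     * pad_mat (d L) m (transpose_mat (permmat m (f \<circ> g))) * Sig d L \<sigma> L * transpose_mat (Q L)"
    unfolding Wset_iff_blocks m_def by blast
  have sO: "square_blocks (Os @ [O0]) (?ns @ [d 0 - ?r])" "square_blocks (Os @ [OL]) (?ns @ [d L - ?r])"
    using orth_blocks_square_blocks[OF WQ(2)] WQ(3,4) orth_mat_carrier square_blocks_snoc by auto
  have sAC: "square_blocks (As @ [C0]) (?ns @ [d 0 - ?r])" "square_blocks (As @ [CL]) (?ns @ [d L - ?r])"
    using sA D0(2) DL(2) orth_mat_carrier square_blocks_snoc by auto
  have sums: "sum_list (?ns @ [d 0 - ?r]) = d 0" "sum_list (?ns @ [d L - ?r]) = d L"
    using sum_block_sizes[OF ys ynn] rY_le[OF ys ynn] m0 mL by auto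
  have "Q 2 * Sig d L \<sigma> 1 \<in> carrier_mat (d 1) (d 0)"
    using bspec[OF WQ(1), of 2] L2 orth_mat_carrier Sig_carrier[of d L \<sigma> 1] by fastforce
  then have "W ! 0 = Q 2 * Sig d L \<sigma> 1 * pad_mat (d 0) m (permmat m f) * blkdiag (map2 (*) As Os @ [C0 * O0])"
    using mult_pad_permmat_comp_blkdiag[OF _ gm m0 D0(3) sAC(1) sO(1) sums(1)] WQ(5) by simp
  moreover have "W ! (L - 1) = blkdiag (map transpose_mat (map2 (*) As Os @ [CL * OL]))
      * pad_mat (d L) m (transpose_mat (permmat m f)) * Sig d L \<sigma> L * transpose_mat (Q L)"
    using blkdiag_transpose_mult_pad_permmat_comp[OF gm mL DL(3) sAC(2) sO(2) sums(2)] WQ(7) by simp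
  ultimately show "W \<in> Wset d L y \<sigma> (permmat m f)"
    unfolding Wset_iff_blocks m_def[symmetric]
    using len WQ(1) WQ(6) orth_blocks_map2_mult[OF D0(1) WQ(2)]
      orth_mat_mult[OF D0(2) WQ(3)] orth_mat_mult[OF DL(2) WQ(4)]
    by blast
qed

lemma Wset_subset_if_Sig_pad_eq:
  fixes L :: nat and d :: "nat \<Rightarrow> nat"
  defines "m \<equiv> dmin d L"
  assumes L2: "2 \<le> L"
    and ys: "\<forall>i j. i \<le> j \<longrightarrow> j < m \<longrightarrow> y j \<le> y i" and ynn: "\<forall>i<m. y i \<ge> 0"
    and P: "P \<in> carrier_mat m m" and P': "P' \<in> carrier_mat m m"
    and first: "Sig d L \<sigma> 1 * pad_mat (d 0) m P = Sig d L \<sigma> 1 * pad_mat (d 0) m P'"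
    and last: "pad_mat (d L) m (transpose_mat P) * Sig d L \<sigma> L
             = pad_mat (d L) m (transpose_mat P') * Sig d L \<sigma> L"
  shows "Wset d L y \<sigma> P \<subseteq> Wset d L y \<sigma> P'"
proof
  let ?r = "rY m y" and ?ns = "block_sizes m y"
  have m0: "m \<le> d 0" and mL: "m \<le> d L" by (auto simp: m_def dmin_def)
  fix W assume "W \<in> Wset d L y \<sigma> P"
  then obtain Q Os O0 OL where len: "length W = L" and
    WQ: "\<forall>l\<in>{2..L}. orth_mat (d (l - 1)) (Q l)"
      "orth_blocks Os ?ns" "orth_mat (d 0 - ?r) O0" "orth_mat (d L - ?r) OL"
      "W ! 0 = Q 2 * Sig d L \<sigma> 1 * pad_mat (d 0) m P * blkdiag (Os @ [O0])"
      "\<forall>l\<in>{2..L - 1}. W ! (l - 1) = Q (l + 1) * Sig d L \<sigma> l * transpose_mat (Q l)"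
      "W ! (L - 1) = blkdiag (map transpose_mat (Os @ [OL])) * pad_mat (d L) m (transpose_mat P)
                     * Sig d L \<sigma> L * transpose_mat (Q L)"
    unfolding Wset_iff_blocks m_def by blast
  have Q2: "Q 2 \<in> carrier_mat (d 1) (d 1)" using WQ(1) L2 orth_mat_carrier by fastforce
  have S1: "Sig d L \<sigma> 1 \<in> carrier_mat (d 1) (d 0)" using Sig_carrier[of d L \<sigma> 1] by simp
  have SL: "Sig d L \<sigma> L \<in> carrier_mat (d L) (d (L - 1))" using Sig_carrier .
  have pad0: "pad_mat (d 0) m X \<in> carrier_mat (d 0) (d 0)" if "X \<in> carrier_mat m m" for X
    using pad_mat_carrier[OF that m0] .
  have padL: "pad_mat (d L) m (transpose_mat X) \<in> carrier_mat (d L) (d L)" if "X \<in> carrier_mat m m" for X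
    using pad_mat_carrier[OF _ mL] that by simp
  have "Q 2 * Sig d L \<sigma> 1 * pad_mat (d 0) m X = Q 2 * (Sig d L \<sigma> 1 * pad_mat (d 0) m X)"
    if "X \<in> carrier_mat m m" for X
    using assoc_mult_mat[OF Q2 S1 pad0[OF that]] .
  then have W0: "W ! 0 = Q 2 * Sig d L \<sigma> 1 * pad_mat (d 0) m P' * blkdiag (Os @ [O0])"
    using WQ(5) first P P' by simp
  have "square_blocks (Os @ [OL]) (?ns @ [d L - ?r])"
    using orth_blocks_square_blocks[OF WQ(2)] orth_mat_carrier[OF WQ(4)] square_blocks_snoc by simp
  then obtain BL where BL: "BL \<in> carrier_mat (d L) (d L)" "BL = blkdiag (map transpose_mat (Os @ [OL]))"
    using blkdiag_carrier[OF square_blocks_map_transpose] sum_block_sizes[OF ys ynn] rY_le[OF ys ynn] mL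
    by fastforce
  have "BL * pad_mat (d L) m (transpose_mat X) * Sig d L \<sigma> L = BL * (pad_mat (d L) m (transpose_mat X) * Sig d L \<sigma> L)"
    if "X \<in> carrier_mat m m" for X
    using assoc_mult_mat[OF BL(1) padL[OF that] SL] .
  then have WL: "W ! (L - 1) = blkdiag (map transpose_mat (Os @ [OL])) * pad_mat (d L) m (transpose_mat P')
                     * Sig d L \<sigma> L * transpose_mat (Q L)"
    using WQ(7) last P P' BL(2) by simp
  show "W \<in> Wset d L y \<sigma> P'"
    unfolding Wset_iff_blocks m_def[symmetric] using len WQ(1-4,6) W0 WL by blast
qed

lemma Sig_mult_pad_permmat_cong:
  fixes d :: "nat \<Rightarrow> nat" and L :: nat
  defines "m \<equiv> dmin d L"
  assumes f: "\<forall>i<m. \<sigma> $ i \<noteq> 0 \<longrightarrow> (\<forall>j<m. (i = f1 j) = (i = f2 j))"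
  shows "Sig d L \<sigma> 1 * pad_mat (d 0) m (permmat m f1) = Sig d L \<sigma> 1 * pad_mat (d 0) m (permmat m f2)"
proof -
  have m0: "m \<le> d 0" by (simp add: m_def dmin_def)
  have F: "pad_mat (d 0) m (permmat m f) \<in> carrier_mat (d 0) (d 0)" for f
    using pad_mat_carrier[OF permmat_carrier m0] .
  have entry: "(Sig d L \<sigma> 1 * pad_mat (d 0) m (permmat m f)) $$ (i,j)
      = (if i < m \<and> j < m \<and> i = f j then \<sigma> $ i else 0)" if "i < d 1" "j < d 0" for f i j
    using index_Sig_mult[of "pad_mat (d 0) m (permmat m f)" d 1 "d 0" i j L \<sigma>] F m0 that
      index_pad_mat[OF permmat_carrier m0 _ that(2), of i]
    by (auto simp: m_def)
  show ?thesis
  proof (rule eq_matI)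
    fix i j assume "i < dim_row (Sig d L \<sigma> 1 * pad_mat (d 0) m (permmat m f2))"
      "j < dim_col (Sig d L \<sigma> 1 * pad_mat (d 0) m (permmat m f2))"
    then have ij: "i < d 1" "j < d 0" using F[of f2] by (auto simp: Sig_def)
    show "(Sig d L \<sigma> 1 * pad_mat (d 0) m (permmat m f1)) $$ (i,j)
             = (Sig d L \<sigma> 1 * pad_mat (d 0) m (permmat m f2)) $$ (i,j)"
    proof -
      have "\<sigma> $ i = 0 \<or> ((i < m \<and> j < m \<and> i = f1 j) \<longleftrightarrow> (i < m \<and> j < m \<and> i = f2 j))"
        using f by blast
      then show ?thesis unfolding entry[OF ij] by auto
    qed
  qed (use F[of f1] F[of f2] in auto)
qed

lemma pad_transpose_permmat_mult_Sig_cong: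
  fixes d :: "nat \<Rightarrow> nat" and L :: nat
  defines "m \<equiv> dmin d L"
  assumes f: "\<forall>i<m. \<sigma> $ i \<noteq> 0 \<longrightarrow> (\<forall>j<m. (i = f1 j) = (i = f2 j))"
  shows "pad_mat (d L) m (transpose_mat (permmat m f1)) * Sig d L \<sigma> L
       = pad_mat (d L) m (transpose_mat (permmat m f2)) * Sig d L \<sigma> L"
proof -
  have mL: "m \<le> d L" by (simp add: m_def dmin_def)
  have F: "pad_mat (d L) m (transpose_mat (permmat m f)) \<in> carrier_mat (d L) (d L)" for f
    using pad_mat_carrier[OF _ mL] by simp
  have entry: "(pad_mat (d L) m (transpose_mat (permmat m f)) * Sig d L \<sigma> L) $$ (i,j)
      = (if i < m \<and> j < m \<and> j = f i then \<sigma> $ j else 0)" if "i < d L" "j < d (L - 1)" for f i j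
    using index_mult_Sig[of "pad_mat (d L) m (transpose_mat (permmat m f))" "d L" d L i j L \<sigma>] F mL that
      index_pad_mat[of "transpose_mat (permmat m f)" m "d L" i j]
    by (auto simp: m_def)
  show ?thesis
  proof (rule eq_matI)
    fix i j assume "i < dim_row (pad_mat (d L) m (transpose_mat (permmat m f2)) * Sig d L \<sigma> L)"
      "j < dim_col (pad_mat (d L) m (transpose_mat (permmat m f2)) * Sig d L \<sigma> L)"
    then have ij: "i < d L" "j < d (L - 1)" using F[of f2] by (auto simp: Sig_def)
    show "(pad_mat (d L) m (transpose_mat (permmat m f1)) * Sig d L \<sigma> L) $$ (i,j)
             = (pad_mat (d L) m (transpose_mat (permmat m f2)) * Sig d L \<sigma> L) $$ (i,j)"
    proof -
      have "\<sigma> $ j = 0 \<or> ((i < m \<and> j < m \<and> j = f1 i) \<longleftrightarrow> (i < m \<and> j < m \<and> j = f2 i))"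
        using f by blast
      then show ?thesis unfolding entry[OF ij] by auto
    qed
  qed (use F[of f1] F[of f2] in auto)
qed

section \<open>The set \<open>\<B>\<close>\<close>

lemma BsetE:
  assumes "(\<sigma>, Pm) \<in> Bset L m lam y"
  obtains p a where "p permutes {..<m}" "Pm = permmat m p" "a \<in> Aset L m lam y"
    "\<forall>j<m. \<sigma> $ p j = a $ j" "\<sigma> \<in> carrier_vec m" "\<forall>i j. i \<le> j \<longrightarrow> j < m \<longrightarrow> \<sigma> $ j \<le> \<sigma> $ i"
proof -
  obtain a where a: "a \<in> Aset L m lam y" "\<sigma> = Pm *\<^sub>v a" and Pm: "perm_mat m Pm"
    using assms by (auto simp: Bset_def)
  obtain p where p: "p permutes {..<m}" "Pm = permmat m p" using Pm by (rule perm_matE)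
  have "\<forall>j<m. \<sigma> $ p j = a $ j"
    using permmat_mult_vec[OF p(1)] a p(2) by (auto simp: Aset_def)
  then show ?thesis using that p a(1) assms by (auto simp: Bset_def)
qed

lemma Bset_nonneg_Yset:
  assumes "(\<sigma>, Pm) \<in> Bset L m lam y" "i < m"
  shows "0 \<le> \<sigma> $ i" "\<sigma> $ i \<in> Yset L m lam y"
proof -
  obtain p a where p: "p permutes {..<m}" and a: "a \<in> Aset L m lam y" "\<forall>j<m. \<sigma> $ p j = a $ j"
    using assms(1) by (rule BsetE)
  define j where "j = Hilbert_Choice.inv p i"
  have j: "j < m" "p j = i"
    using permutes_lessThan[OF permutes_inv[OF p] assms(2)] permutes_inverses(1)[OF p] by (auto simp: j_def)
  then have "\<sigma> $ i = a $ j" using a(2) by auto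
  then show "0 \<le> \<sigma> $ i" "\<sigma> $ i \<in> Yset L m lam y"
    using a(1) j(1) by (auto simp: Aset_def Yset_def algebra_simps)
qed

lemma Aset_entry_eq_imp_y_eq:
  fixes s lam y1 y2 :: real
  assumes "lam > 0" "s > 0"
    "s ^ (2*L - 1) - sqrt lam * y1 * s ^ (L - 1) + lam * s = 0"
    "s ^ (2*L - 1) - sqrt lam * y2 * s ^ (L - 1) + lam * s = 0"
  shows "y1 = y2"
proof -
  have "sqrt lam * s ^ (L - 1) * (y1 - y2) = 0" using assms(3,4) by (simp add: algebra_simps)
  then show ?thesis using assms(1,2) by simp
qed

text \<open>A positive root \<open>a\<^sub>j\<close> of the \<open>j\<close>-th equation determines \<open>y\<^sub>j\<close>, so \<open>\<Pi>\<close> and \<open>\<Pi>'\<close>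
  differ by a \<open>y\<close>-preserving permutation on the support of \<open>\<sigma>\<close>.\<close>

lemma Bset_same_sigma_ex_perm:
  assumes lam: "lam > 0" and B: "(\<sigma>, Pm) \<in> Bset L m lam y" and B': "(\<sigma>, Pm') \<in> Bset L m lam y"
  obtains p p' g where "p permutes {..<m}" "Pm = permmat m p" "p' permutes {..<m}" "Pm' = permmat m p'"
    "g permutes {..<m}" "\<forall>j<m. y (g j) = y j"
    "\<forall>i<m. \<sigma> $ i \<noteq> 0 \<longrightarrow> (\<forall>j<m. (i = p j) = (i = (p' \<circ> g) j))"
proof -
  obtain p a where p: "p permutes {..<m}" "Pm = permmat m p" and
    a: "a \<in> Aset L m lam y" "\<forall>j<m. \<sigma> $ p j = a $ j"
    using B by (rule BsetE)
  obtain p' a' where p': "p' permutes {..<m}" "Pm' = permmat m p'" and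
    a': "a' \<in> Aset L m lam y" "\<forall>j<m. \<sigma> $ p' j = a' $ j"
    using B' by (rule BsetE)
  define S where "S = {j. j < m \<and> 0 < a $ j}"
  define phi where "phi j = Hilbert_Choice.inv p' (p j)" for j
  have phi: "phi j < m" "p' (phi j) = p j" if "j < m" for j
    using permutes_lessThan[OF permutes_inv[OF p'(1)] permutes_lessThan[OF p(1) that]]
      permutes_inverses(1)[OF p'(1)] by (auto simp: phi_def)
  have a'_phi: "a' $ phi j = a $ j" if "j < m" for j
  proof -
    have "a' $ phi j = \<sigma> $ p' (phi j)" using a'(2) phi(1)[OF that] by simp
    also have "\<dots> = a $ j" using a(2) phi(2)[OF that] that by simp
    finally show ?thesis .
  qed
  have "phi = Hilbert_Choice.inv p' \<circ> p" by (rule ext) (simp add: phi_def)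
  then have "inj phi"
    using inj_compose[OF permutes_inj[OF permutes_inv[OF p'(1)]] permutes_inj[OF p(1)]] by simp
  then have "inj_on phi S" by (rule inj_on_subset) simp
  moreover have "\<forall>j\<in>S. y (phi j) = y j"
  proof
    fix j assume "j \<in> S"
    then have j: "j < m" "0 < a $ j" by (auto simp: S_def)
    have "(a $ j) ^ (2*L - 1) - sqrt lam * y (phi j) * (a $ j) ^ (L - 1) + lam * a $ j = 0"
      using a'(1) phi(1)[OF j(1)] a'_phi[OF j(1)] by (auto simp: Aset_def)
    moreover have "(a $ j) ^ (2*L - 1) - sqrt lam * y j * (a $ j) ^ (L - 1) + lam * a $ j = 0"
      using a(1) j(1) by (simp add: Aset_def)
    ultimately show "y (phi j) = y j" by (rule Aset_entry_eq_imp_y_eq[OF lam j(2)])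
  qed
  ultimately obtain g where g: "g permutes {..<m}" "\<forall>j\<in>S. g j = phi j" "\<forall>j\<in>{..<m}. y (g j) = y j"
    using permutes_extend_preserving[of "{..<m}" S phi y] phi by (auto simp: S_def)
  have "(i = p j) = (i = (p' \<circ> g) j)" if i: "i < m" "\<sigma> $ i \<noteq> 0" and j: "j < m" for i j
  proof -
    define j0 where "j0 = Hilbert_Choice.inv p i"
    have j0: "j0 < m" "p j0 = i"
      using permutes_lessThan[OF permutes_inv[OF p(1)] i(1)] permutes_inverses(1)[OF p(1)]
      by (auto simp: j0_def)
    have "0 \<le> a $ j0" using a(1) j0(1) by (simp add: Aset_def)
    moreover have "a $ j0 \<noteq> 0" using a(2) j0 i(2) by auto
    ultimately have "j0 \<in> S" using j0(1) by (simp add: S_def)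
    then have p'g: "p' (g j0) = i" using g(2) phi(2)[OF j0(1)] j0(2) by simp
    have "(i = p j) \<longleftrightarrow> j = j0" using j0(2) permutes_inj[OF p(1)] by (auto simp: inj_eq)
    also have "\<dots> \<longleftrightarrow> p' (g j) = p' (g j0)"
      using permutes_inj[OF p'(1)] permutes_inj[OF g(1)] by (auto simp: inj_eq)
    finally show ?thesis using p'g by auto
  qed
  then show ?thesis using that p p' g(1,3) by blast
qed

lemma Wset_subset_if_same_sigma:
  fixes L :: nat and d :: "nat \<Rightarrow> nat" and y :: "nat \<Rightarrow> real"
  defines "m \<equiv> dmin d L"
  assumes L2: "2 \<le> L" and lam: "lam > 0"
    and ys: "\<forall>i j. i \<le> j \<longrightarrow> j < m \<longrightarrow> y j \<le> y i" and ynn: "\<forall>i<m. y i \<ge> 0"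
    and B: "(\<sigma>, Pm) \<in> Bset L m lam y" and B': "(\<sigma>, Pm') \<in> Bset L m lam y"
  shows "Wset d L y \<sigma> Pm \<subseteq> Wset d L y \<sigma> Pm'"
proof -
  obtain p p' g where p: "Pm = permmat m p" and p': "p' permutes {..<m}" "Pm' = permmat m p'"
    and g: "g permutes {..<m}" "\<forall>j<m. y (g j) = y j"
    and supp: "\<forall>i<m. \<sigma> $ i \<noteq> 0 \<longrightarrow> (\<forall>j<m. (i = p j) = (i = (p' \<circ> g) j))"
    using Bset_same_sigma_ex_perm[OF lam B B'] by metis
  have "Wset d L y \<sigma> Pm \<subseteq> Wset d L y \<sigma> (permmat m (p' \<circ> g))"
    unfolding p m_def
    by (rule Wset_subset_if_Sig_pad_eq[OF L2 ys[unfolded m_def] ynn[unfolded m_def] permmat_carrier permmat_carrier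
          Sig_mult_pad_permmat_cong pad_transpose_permmat_mult_Sig_cong])
      (use supp in \<open>simp_all add: m_def\<close>)
  also have "\<dots> \<subseteq> Wset d L y \<sigma> Pm'"
    unfolding p'(2) m_def by (rule Wset_comp_subset[OF L2 ys[unfolded m_def] ynn[unfolded m_def] g[unfolded m_def]])
  finally show ?thesis .
qed

section \<open>Distances between the sets \<open>\<W>\<close>\<close>

lemma Wset_first_layer:
  fixes L :: nat and d :: "nat \<Rightarrow> nat" and y :: "nat \<Rightarrow> real"
  defines "m \<equiv> dmin d L"
  assumes L2: "2 \<le> L"
    and ys: "\<forall>i j. i \<le> j \<longrightarrow> j < m \<longrightarrow> y j \<le> y i" and ynn: "\<forall>i<m. y i \<ge> 0"
    and Pm: "perm_mat m Pm" and W: "W \<in> Wset d L y \<sigma> Pm"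
  shows "\<exists>U V. orth_mat (d 1) U \<and> orth_mat (d 0) V \<and> W ! 0 = U * Sig d L \<sigma> 1 * V"
proof -
  let ?r = "rY m y" and ?ns = "block_sizes m y"
  have m0: "m \<le> d 0" by (simp add: m_def dmin_def)
  obtain Q Os O0 where Q: "\<forall>l\<in>{2..L}. orth_mat (d (l - 1)) (Q l)"
    and O: "orth_blocks Os ?ns" "orth_mat (d 0 - ?r) O0"
    and W0: "W ! 0 = Q 2 * Sig d L \<sigma> 1 * pad_mat (d 0) m Pm * blkdiag (Os @ [O0])"
    using W unfolding Wset_iff_blocks m_def by blast
  have "orth_blocks (Os @ [O0]) (?ns @ [d 0 - ?r])" using O orth_blocks_snoc by simp
  then have B: "orth_mat (d 0) (blkdiag (Os @ [O0]))"
    using orth_mat_blkdiag sum_block_sizes[OF ys ynn] rY_le[OF ys ynn] m0 by fastforce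
  obtain p where "p permutes {..<m}" "Pm = permmat m p" using Pm by (rule perm_matE)
  then have F: "orth_mat (d 0) (pad_mat (d 0) m Pm)" using orth_mat_pad_mat[OF orth_mat_permmat m0] by simp
  have Q2: "orth_mat (d 1) (Q 2)" using bspec[OF Q, of 2] L2 by simp
  have "Q 2 * Sig d L \<sigma> 1 \<in> carrier_mat (d 1) (d 0)"
    using orth_mat_carrier[OF Q2] Sig_carrier[of d L \<sigma> 1] by simp
  then have "W ! 0 = Q 2 * Sig d L \<sigma> 1 * (pad_mat (d 0) m Pm * blkdiag (Os @ [O0]))"
    using W0 assoc_mult_mat[OF _ orth_mat_carrier[OF F] orth_mat_carrier[OF B]] by simp
  then show ?thesis using Q2 orth_mat_mult[OF F B] by blast
qed

lemma Wset_nonempty: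
  assumes "2 \<le> L"
  shows "Wset d L y \<sigma> Pm \<noteq> {}"
proof -
  define m where "m = dmin d L"
  define Q :: "nat \<Rightarrow> real mat" where "Q l = 1\<^sub>m (d (l - 1))" for l
  define Os :: "real mat list" where "Os = map (\<lambda>n. 1\<^sub>m n) (block_sizes m y)"
  define O0 :: "real mat" where "O0 = 1\<^sub>m (d 0 - rY m y)"
  define OL :: "real mat" where "OL = 1\<^sub>m (d L - rY m y)"
  define W where "W = map (\<lambda>i. if i = 0 then Q 2 * Sig d L \<sigma> 1 * pad_mat (d 0) m Pm * blkdiag (Os @ [O0])
      else if i = L - 1 then blkdiag (map transpose_mat (Os @ [OL])) * pad_mat (d L) m (transpose_mat Pm)
        * Sig d L \<sigma> L * transpose_mat (Q L)
      else Q (i + 2) * Sig d L \<sigma> (i + 1) * transpose_mat (Q (i + 1))) [0..<L]"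
  have "orth_blocks Os (block_sizes m y)" by (simp add: orth_blocks_def Os_def orth_mat_one)
  moreover have "W ! (l - 1) = Q (l + 1) * Sig d L \<sigma> l * transpose_mat (Q l)" if "l \<in> {2..L - 1}" for l
  proof -
    have "l - 1 < L" "l - 1 \<noteq> 0" "l - 1 \<noteq> L - 1" "l - 1 + 2 = l + 1" "l - 1 + 1 = l" using that by auto
    then show ?thesis by (simp add: W_def del: upt_Suc)
  qed
  ultimately have "W \<in> Wset d L y \<sigma> Pm"
    unfolding Wset_iff_blocks m_def[symmetric] using assms
    by (intro conjI exI[of _ Q] exI[of _ Os] exI[of _ O0] exI[of _ OL])
      (simp_all add: W_def Q_def O0_def OL_def orth_mat_one del: upt_Suc)
  then show ?thesis by blast
qed

lemma sum_frob_sq_Wset_ge: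
  fixes L :: nat and d :: "nat \<Rightarrow> nat" and y :: "nat \<Rightarrow> real"
  defines "m \<equiv> dmin d L"
  assumes L2: "2 \<le> L"
    and ys: "\<forall>i j. i \<le> j \<longrightarrow> j < m \<longrightarrow> y j \<le> y i" and ynn: "\<forall>i<m. y i \<ge> 0"
    and dl: "\<forall>l\<in>{1..L - 1}. d l \<ge> m"
    and B: "(\<sigma>, Pm) \<in> Bset L m lam y" and B': "(\<sigma>', Pm') \<in> Bset L m lam y"
    and W: "W \<in> Wset d L y \<sigma> Pm" and W': "W' \<in> Wset d L y \<sigma>' Pm'"
  shows "(\<Sum>i<m. (\<sigma> $ i - \<sigma>' $ i)^2) \<le> (\<Sum>l<L. frob_sq (W ! l - W' ! l))"
proof -
  have m0: "m \<le> d 0" by (simp add: m_def dmin_def)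
  have m1: "m \<le> d 1" using dl L2 by auto
  obtain U V where UV: "orth_mat (d 1) U" "orth_mat (d 0) V" "W ! 0 = U * Sig d L \<sigma> 1 * V"
    using Wset_first_layer[OF L2 ys[unfolded m_def] ynn[unfolded m_def] _ W] B by (auto simp: Bset_def m_def)
  obtain U' V' where UV': "orth_mat (d 1) U'" "orth_mat (d 0) V'" "W' ! 0 = U' * Sig d L \<sigma>' 1 * V'"
    using Wset_first_layer[OF L2 ys[unfolded m_def] ynn[unfolded m_def] _ W'] B' by (auto simp: Bset_def m_def)
  obtain p a where "\<forall>i j. i \<le> j \<longrightarrow> j < m \<longrightarrow> \<sigma> $ j \<le> \<sigma> $ i" using B by (rule BsetE)
  moreover obtain p' a' where "\<forall>i j. i \<le> j \<longrightarrow> j < m \<longrightarrow> \<sigma>' $ j \<le> \<sigma>' $ i" using B' by (rule BsetE)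
  ultimately have "(\<Sum>i<m. (\<sigma> $ i - \<sigma>' $ i)^2) \<le> frob_sq (W ! 0 - W' ! 0)"
    using frob_sq_Sig_orth_diff_ge[of d L 1, OF _ _ UV(1) UV'(1) _ _ _ _ _ _] UV UV' m0 m1
      Bset_nonneg_Yset(1)[OF B] Bset_nonneg_Yset(1)[OF B']
    by (simp add: m_def)
  also have "\<dots> \<le> (\<Sum>l<L. frob_sq (W ! l - W' ! l))"
    using member_le_sum[of 0 "{..<L}" "\<lambda>l. frob_sq (W ! l - W' ! l)"] L2 frob_sq_nonneg by simp
  finally show ?thesis .
qed

lemma delta_sigma_le:
  assumes "x \<in> Yset L m lam y" "x' \<in> Yset L m lam y" "x \<noteq> x'"
  shows "delta_sigma L m lam y \<le> \<bar>x - x'\<bar>"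
  unfolding delta_sigma_def using assms by (intro cInf_lower bdd_belowI[of _ 0]) auto

lemma set_dist_ge:
  assumes "X \<noteq> {}" "X' \<noteq> {}" "\<And>W W'. W \<in> X \<Longrightarrow> W' \<in> X' \<Longrightarrow> c \<le> sqrt (\<Sum>l<L. frob_sq (W ! l - W' ! l))"
  shows "c \<le> set_dist L X X'"
  unfolding set_dist_def using assms by (intro cInf_greatest) auto

lemma set_dist_self_le_0:
  assumes "W \<in> X"
  shows "set_dist L X X \<le> 0"
proof -
  let ?D = "{sqrt (\<Sum>l<L. frob_sq (W ! l - W' ! l)) | W W'. W \<in> X \<and> W' \<in> X}"
  have "0 \<in> ?D"
    by (rule CollectI, rule exI[of _ W], rule exI[of _ W]) (simp add: frob_sq_def assms)
  moreover have "bdd_below ?D" by (rule bdd_belowI[of _ 0]) (auto simp: sum_nonneg frob_sq_nonneg)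
  ultimately show ?thesis unfolding set_dist_def by (rule cInf_lower)
qed

lemma set_dist_Wset_ge:
  fixes L :: nat and d :: "nat \<Rightarrow> nat" and y :: "nat \<Rightarrow> real"
  defines "m \<equiv> dmin d L"
  assumes L2: "2 \<le> L"
    and ys: "\<forall>i j. i \<le> j \<longrightarrow> j < m \<longrightarrow> y j \<le> y i" and ynn: "\<forall>i<m. y i \<ge> 0"
    and dl: "\<forall>l\<in>{1..L - 1}. d l \<ge> m"
    and B: "(\<sigma>, Pm) \<in> Bset L m lam y" and B': "(\<sigma>', Pm') \<in> Bset L m lam y" and i: "i < m"
  shows "\<bar>\<sigma> $ i - \<sigma>' $ i\<bar> \<le> set_dist L (Wset d L y \<sigma> Pm) (Wset d L y \<sigma>' Pm')"
proof (rule set_dist_ge)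
  fix W W' assume W: "W \<in> Wset d L y \<sigma> Pm" and W': "W' \<in> Wset d L y \<sigma>' Pm'"
  have "(\<sigma> $ i - \<sigma>' $ i)^2 \<le> (\<Sum>i<m. (\<sigma> $ i - \<sigma>' $ i)^2)"
    using member_le_sum[of i "{..<m}" "\<lambda>i. (\<sigma> $ i - \<sigma>' $ i)^2"] i by simp
  also have "\<dots> \<le> (\<Sum>l<L. frob_sq (W ! l - W' ! l))"
    using sum_frob_sq_Wset_ge[OF L2 ys[unfolded m_def] ynn[unfolded m_def] dl[unfolded m_def]]
      B B' W W' by (simp add: m_def)
  finally show "\<bar>\<sigma> $ i - \<sigma>' $ i\<bar> \<le> sqrt (\<Sum>l<L. frob_sq (W ! l - W' ! l))"
    using real_sqrt_le_mono by (metis real_sqrt_abs)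
qed (use Wset_nonempty[OF L2] in auto)

theorem proposition3p3:
  fixes L :: nat and d :: "nat \<Rightarrow> nat" and lam :: real and y :: "nat \<Rightarrow> real"
    and \<sigma> \<sigma>' :: "real vec" and Pm Pm' :: "real mat"
  assumes "L \<ge> 2"
    and "\<forall>l\<le>L. d l > 0"
    and "lam > 0"
    and "\<forall>i j. i \<le> j \<longrightarrow> j < dmin d L \<longrightarrow> y j \<le> y i"
    and "\<forall>i<dmin d L. y i \<ge> 0"
    and "\<forall>l\<in>{1..L - 1}. d l \<ge> dmin d L"
    and "(\<sigma>, Pm) \<in> Bset L (dmin d L) lam y"
    and "(\<sigma>', Pm') \<in> Bset L (dmin d L) lam y"
  shows "(Wset d L y \<sigma> Pm = Wset d L y \<sigma>' Pm' \<longleftrightarrow> \<sigma> = \<sigma>') \<and>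
         (\<sigma> \<noteq> \<sigma>' \<longrightarrow>
            set_dist L (Wset d L y \<sigma> Pm) (Wset d L y \<sigma>' Pm') \<ge> delta_sigma L (dmin d L) lam y)"
proof -
  note L2 = assms(1) and lam = assms(3) and ys = assms(4) and ynn = assms(5) and dl = assms(6)
    and B = assms(7) and B' = assms(8)
  let ?m = "dmin d L" and ?W = "Wset d L y \<sigma> Pm" and ?W' = "Wset d L y \<sigma>' Pm'"
  note dist_ge = set_dist_Wset_ge[OF L2 ys ynn dl B B']
  have "\<sigma> \<in> carrier_vec ?m" "\<sigma>' \<in> carrier_vec ?m" using B B' by (simp_all add: Bset_def)
  then have differ: "\<exists>i<?m. \<sigma> $ i \<noteq> \<sigma>' $ i" if "\<sigma> \<noteq> \<sigma>'"
    using that by (metis carrier_vecD eq_vecI)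
  have "\<sigma> = \<sigma>'" if eq: "?W = ?W'"
  proof (rule ccontr)
    assume "\<sigma> \<noteq> \<sigma>'"
    then obtain i where i: "i < ?m" "\<sigma> $ i \<noteq> \<sigma>' $ i" using differ by blast
    obtain W where "W \<in> ?W" using Wset_nonempty[OF L2] by blast
    then have "set_dist L ?W ?W \<le> 0" by (rule set_dist_self_le_0)
    then have "set_dist L ?W ?W' \<le> 0" using eq by simp
    then show False using dist_ge[OF i(1)] i(2) by linarith
  qed
  moreover have "?W = ?W'" if "\<sigma> = \<sigma>'"
    using Wset_subset_if_same_sigma[OF L2 lam ys ynn] B B' that by blast
  moreover have "delta_sigma L ?m lam y \<le> set_dist L ?W ?W'" if "\<sigma> \<noteq> \<sigma>'"
  proof -
    obtain i where i: "i < ?m" "\<sigma> $ i \<noteq> \<sigma>' $ i" using differ[OF \<open>\<sigma> \<noteq> \<sigma>'\<close>] by blast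
    then have "delta_sigma L ?m lam y \<le> \<bar>\<sigma> $ i - \<sigma>' $ i\<bar>"
      using delta_sigma_le Bset_nonneg_Yset(2)[OF B] Bset_nonneg_Yset(2)[OF B'] by blast
    then show ?thesis using dist_ge[OF i(1)] by linarith
  qed
  ultimately show ?thesis by blast
qed

end
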